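(* With $F$ as described in the context, for $(A,g,(a_{ij})),(B,h,(b_{ij}))\in U(M(\rho,k))\times{\rm Aut}_0(\mathcal C)\times\mathcal T$ we have $F(A,g,(a_{ij})_{i\rho j})=F(B,h,(b_{ij})_{i\rho j})$ if and only if $g=h$ and there exist $d_1,\dots,d_n\in k^*$ such that $a_{ij}b_{ij}^{-1}=d_id_j^{-1}$ for all $i\rho j$ and $B^g=A^g\,{\rm diag}(d_1,\dots,d_n)$. Consequently, denoting this equivalence relation by $\approx$, $F$ induces a bijection $$\big(U(M(\rho,k))\times{\rm Aut}_0(\mathcal C)\times\mathcal T\big)/\!\approx\;\longrightarrow\;{\rm Iso}_{alg}({\rm End}(\mathcal F),{\rm End}(\mathcal F')).$$
   Context: Let $k$ be a field, $n\ge 1$, $\rho$ a preorder on $\{1,\dots,n\}$, $M(\rho,k)$ the subalgebra of $M_n(k)$ of matrices with $(i,j)$-entry $0$ whenever $(i,j)\notin\rho$, and $U(M(\rho,k))$ its group of invertible elements. Write $i\sim j$ iff $i\rho j$ and $j\rho i$; $\mathcal C$ is the set of classes, $\hat i$ the class of $i$, ordered by $\hat i\le\hat j$ iff $i\rho j$; $m_\alpha=|\alpha|$. A $\rho$-flag $(V,(V_\alpha)_{\alpha\in\mathcal C})$ is an $n$-dimensional space with subspaces $V_\alpha$ admitting a basis $B=\bigcup_\alpha B_\alpha$ (disjoint) with $|B_\alpha|=m_\alpha$ and $\bigcup_{\beta\le\alpha}B_\beta$ a basis of $V_\alpha$; ${\rm End}(\mathcal F)$ is the algebra of linear $f:V\to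 V$ with $f(V_\alpha)\subseteq V_\alpha$. Let $\mathcal F,\mathcal F'$ be $\rho$-flags on $V,V'$, with fixed adapted bases $(v_i),(v'_i)$ (i.e. $\{v_i:\hat i\le\alpha\}$ is a basis of $V_\alpha$ for all $\alpha$, similarly for $v'_i$); for $i\rho j$, $E_{ij}(v_t)=\delta_{jt}v_i$. ${\rm Aut}_0(\mathcal C)$ is the group of poset automorphisms $g$ of $\mathcal C$ with $m_{g(\alpha)}=m_\alpha$. For $g\in{\rm Aut}_0(\mathcal C)$, $\tilde g\in S_n$ is defined by: if $\alpha=\{i_1<\dots<i_r\}$ and $g(\alpha)=\{j_1<\dots<j_r\}$ then $\tilde g(i_s)=j_s$; for $A\in M_n(k)$, $A^g$ is the matrix whose $(i,j)$-entry is the $(i,\tilde g(j))$-entry of $A$. $\mathcal T$ is the set of families $(a_{ij})_{i\rho j}$ in $k^*$ with $a_{ij}a_{jr}=a_{ir}$ whenever $i\rho j$, $j\rho r$. The map $F$: for $(A,g,(a_{ij}))$, let $w_j=\sum_i (A^g)_{ij}v'_i$, let $F_{ij}\in{\rm End}(V')$ with $F_{ij}(w_j)=a_{ij}w_i$, $F_{ij}(w_r)=0$ for $r\ne j$, and let $F(A,g,(a_{ij}))$ be the linear map ${\rm End}(\mathcal F)\to{\rm End}(\mathcal F')$ sending $E_{ij}\mapsto F_{ij}$ for $i\rho j$ (this is an algebra isomorphism). *)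

theory Defs
  imports Complex_Main "HOL-Library.FuncSet"
begin

text \<open>Indices are 1..n.  A preorder rho on {1..n} is a predicate nat => nat => bool.
  Matrices are functions nat => nat => 'k supported on {1..n} x {1..n}.\<close>

definition idx :: "nat \<Rightarrow> nat set" where "idx n = {1..n}"

definition preorder_on_idx :: "nat \<Rightarrow> (nat \<Rightarrow> nat \<Rightarrow> bool) \<Rightarrow> bool" where
  "preorder_on_idx n \<rho> \<longleftrightarrow> (\<forall>i\<in>idx n. \<rho> i i) \<and>
     (\<forall>i\<in>idx n. \<forall>j\<in>idx n. \<forall>r\<in>idx n. \<rho> i j \<longrightarrow> \<rho> j r \<longrightarrow> \<rho> i r)"

definition cls :: "nat \<Rightarrow> (nat \<Rightarrow> nat \<Rightarrow> bool) \<Rightarrow> nat \<Rightarrow> nat set" where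
  "cls n \<rho> i = {j \<in> idx n. \<rho> i j \<and> \<rho> j i}"

definition Cls :: "nat \<Rightarrow> (nat \<Rightarrow> nat \<Rightarrow> bool) \<Rightarrow> nat set set" where
  "Cls n \<rho> = cls n \<rho> ` idx n"

definition cle :: "(nat \<Rightarrow> nat \<Rightarrow> bool) \<Rightarrow> nat set \<Rightarrow> nat set \<Rightarrow> bool" where
  "cle \<rho> \<alpha> \<beta> \<longleftrightarrow> (\<exists>i\<in>\<alpha>. \<exists>j\<in>\<beta>. \<rho> i j)"

definition Mrho :: "nat \<Rightarrow> (nat \<Rightarrow> nat \<Rightarrow> bool) \<Rightarrow> (nat \<Rightarrow> nat \<Rightarrow> 'k::field) set" where
  "Mrho n \<rho> = {A. \<forall>i j. A i j \<noteq> 0 \<longrightarrow> i \<in> idx n \<and> j \<in> idx n \<and> \<rho> i j}"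

definition matmul :: "nat \<Rightarrow> (nat \<Rightarrow> nat \<Rightarrow> 'k::field) \<Rightarrow> (nat \<Rightarrow> nat \<Rightarrow> 'k) \<Rightarrow> nat \<Rightarrow> nat \<Rightarrow> 'k" where
  "matmul n A B = (\<lambda>i j. \<Sum>t\<in>idx n. A i t * B t j)"

definition matone :: "nat \<Rightarrow> nat \<Rightarrow> nat \<Rightarrow> 'k::field" where
  "matone n = (\<lambda>i j. if i \<in> idx n \<and> i = j then 1 else 0)"

definition Umat :: "nat \<Rightarrow> (nat \<Rightarrow> nat \<Rightarrow> bool) \<Rightarrow> (nat \<Rightarrow> nat \<Rightarrow> 'k::field) set" where
  "Umat n \<rho> = {A \<in> Mrho n \<rho>. \<exists>B \<in> Mrho n \<rho>. matmul n A B = matone n \<and> matmul n B A = matone n}"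

definition Aut0 :: "nat \<Rightarrow> (nat \<Rightarrow> nat \<Rightarrow> bool) \<Rightarrow> (nat set \<Rightarrow> nat set) set" where
  "Aut0 n \<rho> = {g. g \<in> extensional (Cls n \<rho>) \<and> bij_betw g (Cls n \<rho>) (Cls n \<rho>) \<and>
      (\<forall>\<alpha>\<in>Cls n \<rho>. \<forall>\<beta>\<in>Cls n \<rho>. cle \<rho> \<alpha> \<beta> \<longleftrightarrow> cle \<rho> (g \<alpha>) (g \<beta>)) \<and>
      (\<forall>\<alpha>\<in>Cls n \<rho>. card (g \<alpha>) = card \<alpha>)}"

text \<open>gtilde: the s-th smallest element of the class of i goes to the s-th smallest of its image.\<close>
definition gtilde :: "nat \<Rightarrow> (nat \<Rightarrow> nat \<Rightarrow> bool) \<Rightarrow> (nat set \<Rightarrow> nat set) \<Rightarrow> nat \<Rightarrow> nat" where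
  "gtilde n \<rho> g i = sorted_list_of_set (g (cls n \<rho> i)) ! card {t \<in> cls n \<rho> i. t < i}"

definition matg :: "nat \<Rightarrow> (nat \<Rightarrow> nat \<Rightarrow> bool) \<Rightarrow> (nat \<Rightarrow> nat \<Rightarrow> 'k::field) \<Rightarrow> (nat set \<Rightarrow> nat set) \<Rightarrow> nat \<Rightarrow> nat \<Rightarrow> 'k" where
  "matg n \<rho> A g = (\<lambda>i j. if j \<in> idx n then A i (gtilde n \<rho> g j) else 0)"

text \<open>The set T of multiplicative families (a_ij)_{i rho j} in k^*
  (stored as a function, set to 0 off rho).\<close>
definition Tfam :: "nat \<Rightarrow> (nat \<Rightarrow> nat \<Rightarrow> bool) \<Rightarrow> (nat \<Rightarrow> nat \<Rightarrow> 'k::field) set" where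
  "Tfam n \<rho> = {a. (\<forall>i j. \<not> (i \<in> idx n \<and> j \<in> idx n \<and> \<rho> i j) \<longrightarrow> a i j = 0) \<and>
      (\<forall>i\<in>idx n. \<forall>j\<in>idx n. \<rho> i j \<longrightarrow> a i j \<noteq> 0) \<and>
      (\<forall>i\<in>idx n. \<forall>j\<in>idx n. \<forall>r\<in>idx n. \<rho> i j \<longrightarrow> \<rho> j r \<longrightarrow> a i j * a j r = a i r)}"

definition Triples :: "nat \<Rightarrow> (nat \<Rightarrow> nat \<Rightarrow> bool) \<Rightarrow>
    ((nat \<Rightarrow> nat \<Rightarrow> 'k::field) \<times> (nat set \<Rightarrow> nat set) \<times> (nat \<Rightarrow> nat \<Rightarrow> 'k)) set" where
  "Triples n \<rho> = Umat n \<rho> \<times> Aut0 n \<rho> \<times> Tfam n \<rho>"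

definition approx_rel :: "nat \<Rightarrow> (nat \<Rightarrow> nat \<Rightarrow> bool) \<Rightarrow>
    (((nat \<Rightarrow> nat \<Rightarrow> 'k::field) \<times> (nat set \<Rightarrow> nat set) \<times> (nat \<Rightarrow> nat \<Rightarrow> 'k)) \<times>
     ((nat \<Rightarrow> nat \<Rightarrow> 'k) \<times> (nat set \<Rightarrow> nat set) \<times> (nat \<Rightarrow> nat \<Rightarrow> 'k))) set" where
  "approx_rel n \<rho> = {((A, g, a), (B, h, b)). (A, g, a) \<in> Triples n \<rho> \<and> (B, h, b) \<in> Triples n \<rho> \<and>
      g = h \<and> (\<exists>d. (\<forall>i\<in>idx n. d i \<noteq> 0) \<and>
        (\<forall>i\<in>idx n. \<forall>j\<in>idx n. \<rho> i j \<longrightarrow> a i j * inverse (b i j) = d i * inverse (d j)) \<and>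
        (\<forall>i\<in>idx n. \<forall>j\<in>idx n. matg n \<rho> B g i j = matg n \<rho> A g i j * d j))}"

text \<open>Flags with adapted bases.  V is the whole space 'v (a vector space over 'k with scalar
  multiplication s); v 1, ..., v n is a basis; Vf alpha is the flag subspace indexed by the class alpha.\<close>
definition is_basis_fam :: "('k::field \<Rightarrow> 'v::ab_group_add \<Rightarrow> 'v) \<Rightarrow> nat \<Rightarrow> (nat \<Rightarrow> 'v) \<Rightarrow> bool" where
  "is_basis_fam s n v \<longleftrightarrow> inj_on v (idx n) \<and> \<not> module.dependent s (v ` idx n) \<and>
      module.span s (v ` idx n) = UNIV"

definition adapted_flag :: "('k::field \<Rightarrow> 'v::ab_group_add \<Rightarrow> 'v) \<Rightarrow> nat \<Rightarrow> (nat \<Rightarrow> nat \<Rightarrow> bool)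
    \<Rightarrow> (nat set \<Rightarrow> 'v set) \<Rightarrow> (nat \<Rightarrow> 'v) \<Rightarrow> bool" where
  "adapted_flag s n \<rho> Vf v \<longleftrightarrow> is_basis_fam s n v \<and>
      (\<forall>\<alpha>\<in>Cls n \<rho>. Vf \<alpha> = module.span s (v ` {i \<in> idx n. cle \<rho> (cls n \<rho> i) \<alpha>}))"

definition EndF :: "('k::field \<Rightarrow> 'v::ab_group_add \<Rightarrow> 'v) \<Rightarrow> nat \<Rightarrow> (nat \<Rightarrow> nat \<Rightarrow> bool)
    \<Rightarrow> (nat set \<Rightarrow> 'v set) \<Rightarrow> ('v \<Rightarrow> 'v) set" where
  "EndF s n \<rho> Vf = {f. Vector_Spaces.linear s s f \<and> (\<forall>\<alpha>\<in>Cls n \<rho>. f ` Vf \<alpha> \<subseteq> Vf \<alpha>)}"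

definition Iso_alg :: "('k::field \<Rightarrow> 'v::ab_group_add \<Rightarrow> 'v) \<Rightarrow> ('k \<Rightarrow> 'w::ab_group_add \<Rightarrow> 'w)
    \<Rightarrow> ('v \<Rightarrow> 'v) set \<Rightarrow> ('w \<Rightarrow> 'w) set \<Rightarrow> (('v \<Rightarrow> 'v) \<Rightarrow> ('w \<Rightarrow> 'w)) set" where
  "Iso_alg s s' E E' = {\<phi>. \<phi> \<in> extensional E \<and> bij_betw \<phi> E E' \<and>
      (\<forall>f\<in>E. \<forall>f2\<in>E. \<phi> (\<lambda>x. f x + f2 x) = (\<lambda>y. \<phi> f y + \<phi> f2 y)) \<and>
      (\<forall>c. \<forall>f\<in>E. \<phi> (\<lambda>x. s c (f x)) = (\<lambda>y. s' c (\<phi> f y))) \<and>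
      (\<forall>f\<in>E. \<forall>f2\<in>E. \<phi> (f \<circ> f2) = \<phi> f \<circ> \<phi> f2) \<and>
      \<phi> id = id}"

text \<open>E_ij coordinates: f = sum over i rho j of c_ij E_ij with c_ij the v_i-coordinate of f(v_j).\<close>
definition coordE :: "('k::field \<Rightarrow> 'v::ab_group_add \<Rightarrow> 'v) \<Rightarrow> nat \<Rightarrow> (nat \<Rightarrow> 'v) \<Rightarrow> ('v \<Rightarrow> 'v)
    \<Rightarrow> nat \<Rightarrow> nat \<Rightarrow> 'k" where
  "coordE s n v f i j = module.representation s (v ` idx n) (f (v j)) (v i)"

text \<open>w_j = sum_i (A^g)_ij v'_i and F_ij with F_ij(w_j) = a_ij w_i, F_ij(w_r) = 0 (r /= j).\<close>
definition wvec :: "('k::field \<Rightarrow> 'w::ab_group_add \<Rightarrow> 'w) \<Rightarrow> nat \<Rightarrow> (nat \<Rightarrow> nat \<Rightarrow> bool) \<Rightarrow> (nat \<Rightarrow> 'w)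
    \<Rightarrow> (nat \<Rightarrow> nat \<Rightarrow> 'k) \<Rightarrow> (nat set \<Rightarrow> nat set) \<Rightarrow> nat \<Rightarrow> 'w" where
  "wvec s' n \<rho> v' A g j = (\<Sum>i\<in>idx n. s' (matg n \<rho> A g i j) (v' i))"

definition Fij :: "('k::field \<Rightarrow> 'w::ab_group_add \<Rightarrow> 'w) \<Rightarrow> nat \<Rightarrow> (nat \<Rightarrow> nat \<Rightarrow> bool) \<Rightarrow> (nat \<Rightarrow> 'w)
    \<Rightarrow> (nat \<Rightarrow> nat \<Rightarrow> 'k) \<Rightarrow> (nat set \<Rightarrow> nat set) \<Rightarrow> (nat \<Rightarrow> nat \<Rightarrow> 'k) \<Rightarrow> nat \<Rightarrow> nat \<Rightarrow> 'w \<Rightarrow> 'w" where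
  "Fij s' n \<rho> v' A g a i j = (\<lambda>x.
      s' (module.representation s' (wvec s' n \<rho> v' A g ` idx n) x (wvec s' n \<rho> v' A g j) * a i j)
         (wvec s' n \<rho> v' A g i))"

text \<open>F(A,g,a): the linear map End(F) -> End(F') with E_ij |-> F_ij (extensional on End(F)).\<close>
definition Fmap :: "('k::field \<Rightarrow> 'v::ab_group_add \<Rightarrow> 'v) \<Rightarrow> ('k \<Rightarrow> 'w::ab_group_add \<Rightarrow> 'w) \<Rightarrow> nat
    \<Rightarrow> (nat \<Rightarrow> nat \<Rightarrow> bool) \<Rightarrow> (nat set \<Rightarrow> 'v set) \<Rightarrow> (nat \<Rightarrow> 'v) \<Rightarrow> (nat \<Rightarrow> 'w)
    \<Rightarrow> (nat \<Rightarrow> nat \<Rightarrow> 'k) \<times> (nat set \<Rightarrow> nat set) \<times> (nat \<Rightarrow> nat \<Rightarrow> 'k) \<Rightarrow> ('v \<Rightarrow> 'v) \<Rightarrow> ('w \<Rightarrow> 'w)" where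
  "Fmap s s' n \<rho> Vf v v' T = (case T of (A, g, a) \<Rightarrow>
     restrict (\<lambda>f. \<lambda>x. \<Sum>(i, j)\<in>{(i, j). i \<in> idx n \<and> j \<in> idx n \<and> \<rho> i j}.
                 s' (coordE s n v f i j) (Fij s' n \<rho> v' A g a i j x))
              (EndF s n \<rho> Vf))"

end

theory Submission
  imports Defs
begin

text \<open>In the bases \<open>v\<close> of \<open>V\<close> and \<open>w\<^sub>j = \<Sum>\<^sub>i (A\<^sup>g)\<^sub>i\<^sub>j v'\<^sub>i\<close> of \<open>V'\<close>, the map \<open>F(A, g, a)\<close> sends
  an endomorphism with matrix \<open>M\<close> to the one with matrix \<open>(a\<^sub>i\<^sub>j M\<^sub>i\<^sub>j)\<close>. Endomorphisms of a flag
  are exactly the maps whose matrix in an adapted basis is supported on \<open>\<rho>\<close>, \<open>w\<close> is adapted to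
  \<open>\<F>'\<close> after relabelling the classes by \<open>g\<close>, and the multiplicativity of \<open>a\<close> makes the
  entrywise twist multiplicative; so \<open>F(A, g, a)\<close> is an algebra isomorphism.

  Two triples give the same map iff the two bases \<open>w\<close> agree up to rescaling each \<open>w\<^sub>j\<close> by some
  \<open>d\<^sub>j\<close>: rescaling does not move \<open>w\<^sub>j\<close> in the flag, which forces equal \<open>g\<close>, and comparing the
  images of the matrix units \<open>E\<^sub>i\<^sub>j\<close> gives the relation between \<open>a\<close> and \<open>b\<close>.

  Conversely, an isomorphism \<open>\<phi>\<close> sends the orthogonal idempotents \<open>E\<^sub>j\<^sub>j\<close> to idempotents
  \<open>F\<^sub>j\<^sub>j\<close> of rank one (sandwich arguments with rank-one endomorphisms of \<open>\<F>'\<close>); vectors \<open>w\<^sub>j\<close>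
  spanning their ranges form a basis, the position of \<open>w\<^sub>j\<close> in the flag defines \<open>g\<close> (class sizes
  are preserved by a dimension count), the coordinates of the \<open>w\<^sub>j\<close> give \<open>A\<close>, and
  \<open>\<phi>(E\<^sub>i\<^sub>j) w\<^sub>j = a\<^sub>i\<^sub>j w\<^sub>i\<close> gives \<open>a\<close>.\<close>

lemma finite_idx [simp]: "finite (idx n)"
  by (simp add: idx_def)

lemma linear_apply:
  assumes "Vector_Spaces.linear s1 s2 f"
  shows "f (s1 c x) = s2 c (f x)" and "f 0 = 0"
    and "f (\<Sum>k\<in>K. s1 (c' k) (g k)) = (\<Sum>k\<in>K. s2 (c' k) (f (g k)))"
proof -
  interpret module_hom s1 s2 f
    using assms by (simp add: module_hom_iff_linear)
  show "f (s1 c x) = s2 c (f x)" "f 0 = 0"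
    "f (\<Sum>k\<in>K. s1 (c' k) (g k)) = (\<Sum>k\<in>K. s2 (c' k) (f (g k)))"
    by (simp_all add: scale sum)
qed

section \<open>Coordinates and matrices with respect to a basis\<close>

locale coord_basis = vector_space scale for scale :: "'k::field \<Rightarrow> 'v::ab_group_add \<Rightarrow> 'v" +
  fixes n :: nat and u :: "nat \<Rightarrow> 'v"
  assumes basis: "is_basis_fam scale n u"
begin

definition coord :: "'v \<Rightarrow> nat \<Rightarrow> 'k" where
  "coord x i = representation (u ` idx n) x (u i)"

lemma inj_on_basis: "inj_on u (idx n)"
  and independent_basis: "independent (u ` idx n)"
  and span_basis: "span (u ` idx n) = UNIV"
  using basis by (auto simp: is_basis_fam_def)

lemma coord_expansion: "(\<Sum>i\<in>idx n. scale (coord x i) (u i)) = x"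
proof -
  have "(\<Sum>b\<in>u ` idx n. scale (representation (u ` idx n) x b) b) = x"
    by (rule sum_representation_eq) (use independent_basis span_basis in auto)
  then show ?thesis
    using inj_on_basis by (simp add: sum.reindex coord_def)
qed

lemma coord_add: "coord (x + y) i = coord x i + coord y i"
  unfolding coord_def by (subst representation_add) (use independent_basis span_basis in auto)

lemma coord_scale: "coord (scale c x) i = c * coord x i"
  unfolding coord_def by (subst representation_scale) (use independent_basis span_basis in auto)

lemma coord_zero [simp]: "coord 0 i = 0"
  unfolding coord_def by (simp add: representation_zero)

lemma coord_sum: "coord (sum f K) i = (\<Sum>k\<in>K. coord (f k) i)"
  unfolding coord_def by (subst representation_sum) (use independent_basis span_basis in auto)

lemma coord_basis_vec:
  "j \<in> idx n \<Longrightarrow> i \<in> idx n \<Longrightarrow> coord (u j) i = (if i = j then 1 else 0)"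
  unfolding coord_def using inj_on_basis
  by (subst representation_basis) (use independent_basis in \<open>auto simp: inj_on_def\<close>)

lemma coord_lincomb: "i \<in> idx n \<Longrightarrow> coord (\<Sum>j\<in>idx n. scale (c j) (u j)) i = c i"
  by (simp add: coord_sum coord_scale coord_basis_vec if_distrib cong: if_cong)

lemma coord_eqI: "(\<And>i. i \<in> idx n \<Longrightarrow> coord x i = coord y i) \<Longrightarrow> x = y"
  by (metis (no_types, lifting) coord_expansion sum.cong)

lemma basis_nonzero: "i \<in> idx n \<Longrightarrow> u i \<noteq> 0"
  using coord_basis_vec[of i i] by auto

lemma in_span_basis_iff:
  assumes "S \<subseteq> idx n"
  shows "x \<in> span (u ` S) \<longleftrightarrow> (\<forall>i\<in>idx n - S. coord x i = 0)"
proof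
  assume "x \<in> span (u ` S)"
  then obtain c where c: "x = (\<Sum>b\<in>u ` S. scale (c b) b)"
    using span_finite[of "u ` S"] assms finite_subset by fastforce
  have "inj_on u S"
    using inj_on_basis assms inj_on_subset by blast
  then have "x = (\<Sum>j\<in>S. scale (c (u j)) (u j))"
    using c by (simp add: sum.reindex)
  also have "\<dots> = (\<Sum>j\<in>idx n. scale (if j \<in> S then c (u j) else 0) (u j))"
    using assms by (auto intro!: sum.mono_neutral_cong_left)
  finally show "\<forall>i\<in>idx n - S. coord x i = 0"
    by (auto simp: coord_lincomb)
next
  assume zero: "\<forall>i\<in>idx n - S. coord x i = 0"
  have "x = (\<Sum>i\<in>idx n. scale (coord x i) (u i))"
    by (simp add: coord_expansion)
  also have "\<dots> = (\<Sum>i\<in>S. scale (coord x i) (u i))"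
    using assms zero by (intro sum.mono_neutral_cong_right) auto
  also have "\<dots> \<in> span (u ` S)"
    by (intro span_sum span_scale span_base) auto
  finally show "x \<in> span (u ` S)" .
qed

definition mat_of :: "('v \<Rightarrow> 'v) \<Rightarrow> nat \<Rightarrow> nat \<Rightarrow> 'k" where
  "mat_of f i j = (if i \<in> idx n \<and> j \<in> idx n then coord (f (u j)) i else 0)"

definition lin_of_mat :: "(nat \<Rightarrow> nat \<Rightarrow> 'k) \<Rightarrow> 'v \<Rightarrow> 'v" where
  "lin_of_mat M x = (\<Sum>i\<in>idx n. scale (\<Sum>j\<in>idx n. M i j * coord x j) (u i))"

lemma mat_of_entry: "i \<in> idx n \<Longrightarrow> j \<in> idx n \<Longrightarrow> mat_of f i j = coord (f (u j)) i"
  by (simp add: mat_of_def)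

lemma mat_of_outside: "i \<notin> idx n \<or> j \<notin> idx n \<Longrightarrow> mat_of f i j = 0"
  by (auto simp: mat_of_def)

lemma mat_of_add: "mat_of (\<lambda>x. f x + g x) i j = mat_of f i j + mat_of g i j"
  by (simp add: mat_of_def coord_add)

lemma mat_of_scale: "mat_of (\<lambda>x. scale c (f x)) i j = c * mat_of f i j"
  by (simp add: mat_of_def coord_scale)

lemma mat_of_id: "mat_of id = matone n"
  by (auto simp: mat_of_def coord_basis_vec matone_def fun_eq_iff)

lemma mat_of_comp:
  assumes f: "Vector_Spaces.linear scale scale f" and "Vector_Spaces.linear scale scale g"
  shows "mat_of (f \<circ> g) = matmul n (mat_of f) (mat_of g)"
proof (intro ext)
  fix i j
  show "mat_of (f \<circ> g) i j = matmul n (mat_of f) (mat_of g) i j"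
  proof (cases "i \<in> idx n \<and> j \<in> idx n")
    case True
    have "f (g (u j)) = f (\<Sum>k\<in>idx n. scale (mat_of g k j) (u k))"
      using True by (simp add: mat_of_entry coord_expansion cong: sum.cong)
    also have "\<dots> = (\<Sum>k\<in>idx n. scale (mat_of g k j) (f (u k)))"
      by (simp add: linear_apply(3)[OF f])
    finally show ?thesis
      using True by (simp add: mat_of_entry matmul_def coord_sum coord_scale mult.commute cong: sum.cong)
  next
    case False
    then show ?thesis by (auto simp: mat_of_outside matmul_def)
  qed
qed

lemma linear_lin_of_mat: "Vector_Spaces.linear scale scale (lin_of_mat M)"
  unfolding Vector_Spaces.linear_iff
proof (intro conjI allI)
  show "vector_space scale" "vector_space scale" by unfold_locales
  fix x y :: 'v and c :: 'k
  show "lin_of_mat M (x + y) = lin_of_mat M x + lin_of_mat M y"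
    unfolding lin_of_mat_def coord_add
    by (simp add: distrib_left sum.distrib scale_left_distrib)
  show "lin_of_mat M (scale c x) = scale c (lin_of_mat M x)"
    unfolding lin_of_mat_def coord_scale
    by (simp add: scale_sum_right sum_distrib_left mult.left_commute)
qed

lemma lin_of_mat_mat_of:
  assumes f: "Vector_Spaces.linear scale scale f"
  shows "lin_of_mat (mat_of f) = f"
proof
  fix x
  have "f x = f (\<Sum>j\<in>idx n. scale (coord x j) (u j))"
    by (simp add: coord_expansion)
  also have "\<dots> = (\<Sum>j\<in>idx n. scale (coord x j) (f (u j)))"
    by (simp add: linear_apply(3)[OF f])
  also have "\<dots> = (\<Sum>j\<in>idx n. scale (coord x j) (\<Sum>i\<in>idx n. scale (mat_of f i j) (u i)))"
    by (intro sum.cong refl) (simp add: mat_of_entry coord_expansion cong: sum.cong)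
  also have "\<dots> = (\<Sum>j\<in>idx n. \<Sum>i\<in>idx n. scale (mat_of f i j * coord x j) (u i))"
    by (simp add: scale_sum_right mult.commute)
  also have "\<dots> = lin_of_mat (mat_of f) x"
    unfolding lin_of_mat_def by (subst sum.swap) (simp add: scale_sum_left)
  finally show "lin_of_mat (mat_of f) x = f x" by simp
qed

lemma coord_lin_of_mat:
  "i \<in> idx n \<Longrightarrow> coord (lin_of_mat M x) i = (\<Sum>j\<in>idx n. M i j * coord x j)"
  unfolding lin_of_mat_def by (rule coord_lincomb)

lemma mat_of_lin_of_mat_entry:
  "i \<in> idx n \<Longrightarrow> j \<in> idx n \<Longrightarrow> mat_of (lin_of_mat M) i j = M i j"
  by (simp add: mat_of_entry coord_lin_of_mat coord_basis_vec if_distrib cong: if_cong)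

lemma mat_of_lin_of_mat:
  assumes "M \<in> Mrho n \<rho>"
  shows "mat_of (lin_of_mat M) = M"
proof (intro ext)
  fix i j
  show "mat_of (lin_of_mat M) i j = M i j"
    using assms
    by (cases "i \<in> idx n \<and> j \<in> idx n") (auto simp: mat_of_lin_of_mat_entry mat_of_outside Mrho_def)
qed

lemma lin_of_mat_add: "lin_of_mat (\<lambda>i j. M i j + N i j) x = lin_of_mat M x + lin_of_mat N x"
  unfolding lin_of_mat_def by (simp add: distrib_right sum.distrib scale_left_distrib)

lemma lin_of_mat_scale: "lin_of_mat (\<lambda>i j. c * M i j) x = scale c (lin_of_mat M x)"
  unfolding lin_of_mat_def by (simp add: scale_sum_right sum_distrib_left mult.assoc)

lemma lin_of_mat_zero: "lin_of_mat (\<lambda>_ _. 0) = (\<lambda>x. 0)"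
  by (simp add: lin_of_mat_def fun_eq_iff)

lemma lin_of_mat_matmul: "lin_of_mat (matmul n M N) = lin_of_mat M \<circ> lin_of_mat N"
proof
  fix x
  have "lin_of_mat M (lin_of_mat N x) =
      (\<Sum>i\<in>idx n. scale (\<Sum>j\<in>idx n. M i j * (\<Sum>k\<in>idx n. N j k * coord x k)) (u i))"
    unfolding lin_of_mat_def[of M] by (simp add: coord_lin_of_mat cong: sum.cong)
  also have "\<dots> = lin_of_mat (matmul n M N) x"
  proof -
    have "(\<Sum>j\<in>idx n. M i j * (\<Sum>k\<in>idx n. N j k * coord x k)) =
        (\<Sum>k\<in>idx n. (\<Sum>t\<in>idx n. M i t * N t k) * coord x k)" for i
      by (simp add: sum_distrib_left sum_distrib_right mult.assoc, subst sum.swap, simp)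
    then show ?thesis
      unfolding lin_of_mat_def matmul_def by simp
  qed
  finally show "lin_of_mat (matmul n M N) x = (lin_of_mat M \<circ> lin_of_mat N) x"
    by simp
qed

lemma lin_of_mat_matone: "lin_of_mat (matone n) = id"
proof
  fix x
  have "(\<Sum>j\<in>idx n. (if i \<in> idx n \<and> i = j then 1 else 0) * coord x j) = coord x i"
    if "i \<in> idx n" for i
    using that by (simp add: if_distrib[of "\<lambda>z. z * _"] cong: if_cong)
  then show "lin_of_mat (matone n) x = id x"
    unfolding lin_of_mat_def matone_def by (simp add: coord_expansion cong: sum.cong)
qed

lemma coord_apply:
  assumes f: "Vector_Spaces.linear scale scale f" and r: "r \<in> idx n"
  shows "coord (f x) r = (\<Sum>j\<in>idx n. coord x j * mat_of f r j)"
proof -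
  have "f x = (\<Sum>j\<in>idx n. scale (coord x j) (f (u j)))"
    by (subst coord_expansion[of x, symmetric]) (simp add: linear_apply(3)[OF f])
  then show ?thesis
    using r by (simp add: coord_sum coord_scale mat_of_entry cong: sum.cong)
qed

text \<open>\<open>P \<beta> r\<close> says that the basis vector \<open>u r\<close> lies in the level \<open>\<beta>\<close> of the flag \<open>Vf\<close>.\<close>

lemma mat_support_if_EndF:
  assumes Vf: "\<forall>\<beta>\<in>Cls n \<rho>. Vf \<beta> = span (u ` {r\<in>idx n. P \<beta> r})"
    and principal: "\<forall>t\<in>idx n. \<exists>\<beta>\<in>Cls n \<rho>. \<forall>r\<in>idx n. P \<beta> r \<longleftrightarrow> R r t"
    and refl: "\<forall>t\<in>idx n. R t t"
    and f: "f \<in> EndF scale n \<rho> Vf" and r: "r \<in> idx n" and t: "t \<in> idx n" and nz: "mat_of f r t \<noteq> 0"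
  shows "R r t"
proof (rule ccontr)
  assume nR: "\<not> R r t"
  obtain \<beta> where \<beta>: "\<beta> \<in> Cls n \<rho>" "\<forall>r\<in>idx n. P \<beta> r \<longleftrightarrow> R r t"
    using principal t by blast
  have "u t \<in> Vf \<beta>"
    using Vf \<beta> refl t by (auto intro!: span_base)
  moreover have "f ` Vf \<beta> \<subseteq> Vf \<beta>"
    using f \<beta> by (simp add: EndF_def)
  ultimately have "f (u t) \<in> span (u ` {r\<in>idx n. P \<beta> r})"
    using Vf \<beta> by auto
  then show False
    using in_span_basis_iff[of "{r\<in>idx n. P \<beta> r}"] r t nR nz \<beta> by (auto simp: mat_of_def)
qed

lemma EndF_if_mat_support:
  assumes Vf: "\<forall>\<beta>\<in>Cls n \<rho>. Vf \<beta> = span (u ` {r\<in>idx n. P \<beta> r})"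
    and down: "\<forall>\<beta>\<in>Cls n \<rho>. \<forall>r\<in>idx n. \<forall>t\<in>idx n. P \<beta> t \<longrightarrow> R r t \<longrightarrow> P \<beta> r"
    and f: "Vector_Spaces.linear scale scale f"
    and supp: "\<forall>r\<in>idx n. \<forall>t\<in>idx n. mat_of f r t \<noteq> 0 \<longrightarrow> R r t"
  shows "f \<in> EndF scale n \<rho> Vf"
proof -
  have "f x \<in> Vf \<beta>" if \<beta>: "\<beta> \<in> Cls n \<rho>" and x: "x \<in> Vf \<beta>" for \<beta> x
  proof -
    let ?S = "{r\<in>idx n. P \<beta> r}"
    have x0: "\<forall>i\<in>idx n - ?S. coord x i = 0"
      using x Vf \<beta> in_span_basis_iff[of ?S] by auto
    have terms: "coord x j * mat_of f r j = 0" if r: "r \<in> idx n" "\<not> P \<beta> r" and j: "j \<in> idx n" for r j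
    proof (cases "P \<beta> j")
      case True
      then have "\<not> R r j"
        using down \<beta> r j by blast
      then show ?thesis
        using supp r j by auto
    qed (use x0 j in auto)
    have "coord (f x) r = 0" if r: "r \<in> idx n" "\<not> P \<beta> r" for r
    proof -
      have "coord (f x) r = (\<Sum>j\<in>idx n. coord x j * mat_of f r j)"
        by (rule coord_apply[OF f r(1)])
      also have "\<dots> = 0"
        using terms[OF r] by (intro sum.neutral ballI)
      finally show ?thesis .
    qed
    then have "\<forall>r\<in>idx n - ?S. coord (f x) r = 0"
      by blast
    then show ?thesis
      using Vf \<beta> in_span_basis_iff[of ?S] by auto
  qed
  with f show ?thesis
    by (auto simp: EndF_def)
qed

lemma EndF_iff_mat_support:
  assumes "\<forall>\<beta>\<in>Cls n \<rho>. Vf \<beta> = span (u ` {r\<in>idx n. P \<beta> r})"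
    and "\<forall>t\<in>idx n. \<exists>\<beta>\<in>Cls n \<rho>. \<forall>r\<in>idx n. P \<beta> r \<longleftrightarrow> R r t"
    and "\<forall>\<beta>\<in>Cls n \<rho>. \<forall>r\<in>idx n. \<forall>t\<in>idx n. P \<beta> t \<longrightarrow> R r t \<longrightarrow> P \<beta> r"
    and "\<forall>t\<in>idx n. R t t"
  shows "f \<in> EndF scale n \<rho> Vf \<longleftrightarrow>
    Vector_Spaces.linear scale scale f \<and> (\<forall>r\<in>idx n. \<forall>t\<in>idx n. mat_of f r t \<noteq> 0 \<longrightarrow> R r t)"
proof
  assume "f \<in> EndF scale n \<rho> Vf"
  then show "Vector_Spaces.linear scale scale f \<and> (\<forall>r\<in>idx n. \<forall>t\<in>idx n. mat_of f r t \<noteq> 0 \<longrightarrow> R r t)"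
    using mat_support_if_EndF[OF assms(1,2,4)] by (auto simp: EndF_def)
next
  assume "Vector_Spaces.linear scale scale f \<and> (\<forall>r\<in>idx n. \<forall>t\<in>idx n. mat_of f r t \<noteq> 0 \<longrightarrow> R r t)"
  then show "f \<in> EndF scale n \<rho> Vf"
    using EndF_if_mat_support[OF assms(1,3)] by blast
qed

lemma basis_change_expansion:
  assumes PQ: "\<And>i r. i \<in> idx n \<Longrightarrow> r \<in> idx n \<Longrightarrow> (\<Sum>j\<in>idx n. P i j * Q j r) = (if i = r then 1 else 0)"
    and w: "\<And>j. j \<in> idx n \<Longrightarrow> w j = (\<Sum>i\<in>idx n. scale (P i j) (u i))"
  shows "x = (\<Sum>j\<in>idx n. scale (\<Sum>i\<in>idx n. Q j i * coord x i) (w j))"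
proof (rule coord_eqI)
  have coord_w: "coord (w j) i = P i j" if "i \<in> idx n" "j \<in> idx n" for i j
    using that by (simp add: w coord_lincomb)
  fix k assume k: "k \<in> idx n"
  have "coord (\<Sum>j\<in>idx n. scale (\<Sum>i\<in>idx n. Q j i * coord x i) (w j)) k
      = (\<Sum>j\<in>idx n. (\<Sum>i\<in>idx n. Q j i * coord x i) * P k j)"
    using k by (simp add: coord_sum coord_scale coord_w cong: sum.cong)
  also have "\<dots> = (\<Sum>i\<in>idx n. (\<Sum>j\<in>idx n. P k j * Q j i) * coord x i)"
    by (simp add: sum_distrib_right sum_distrib_left mult.commute mult.left_commute, subst sum.swap, simp)
  also have "\<dots> = coord x k"
    using k by (simp add: PQ if_distrib[of "\<lambda>z. z * _"] cong: if_cong)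
  finally show "coord x k = coord (\<Sum>j\<in>idx n. scale (\<Sum>i\<in>idx n. Q j i * coord x i) (w j)) k"
    by simp
qed

lemma basis_change_is_basis:
  assumes PQ: "\<And>i r. i \<in> idx n \<Longrightarrow> r \<in> idx n \<Longrightarrow> (\<Sum>j\<in>idx n. P i j * Q j r) = (if i = r then 1 else 0)"
    and QP: "\<And>j k. j \<in> idx n \<Longrightarrow> k \<in> idx n \<Longrightarrow> (\<Sum>i\<in>idx n. Q j i * P i k) = (if j = k then 1 else 0)"
    and w: "\<And>j. j \<in> idx n \<Longrightarrow> w j = (\<Sum>i\<in>idx n. scale (P i j) (u i))"
  shows "is_basis_fam scale n w"
proof -
  have coord_w: "coord (w j) i = P i j" if "i \<in> idx n" "j \<in> idx n" for i j
    using that by (simp add: w coord_lincomb)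
  have inj: "inj_on w (idx n)"
  proof (rule inj_onI)
    fix j k assume j: "j \<in> idx n" and k: "k \<in> idx n" and e: "w j = w k"
    have "(\<Sum>i\<in>idx n. Q j i * P i k) = (\<Sum>i\<in>idx n. Q j i * P i j)"
      using e j k by (intro sum.cong refl) (metis coord_w)
    then show "j = k"
      using QP[OF j k] QP[OF j j] by (auto split: if_splits)
  qed
  have expansion: "y = (\<Sum>j\<in>idx n. scale (\<Sum>i\<in>idx n. Q j i * coord y i) (w j))" for y
    by (rule basis_change_expansion) (use PQ w in auto)
  have "y \<in> span (w ` idx n)" for y
    by (subst expansion[of y]) (intro span_sum span_scale span_base, auto)
  then have spanning: "span (w ` idx n) = UNIV"
    by auto
  have "\<not> dependent (w ` idx n)"
  proof
    assume "dependent (w ` idx n)"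
    then obtain c where c1: "\<exists>b\<in>w ` idx n. c b \<noteq> 0" and c2: "(\<Sum>b\<in>w ` idx n. scale (c b) b) = 0"
      using dependent_finite[of "w ` idx n"] by auto
    have lincomb: "(\<Sum>j\<in>idx n. scale (c (w j)) (w j)) = 0"
      using c2 inj by (simp add: sum.reindex)
    have zero: "(\<Sum>j\<in>idx n. P i j * c (w j)) = 0" if i: "i \<in> idx n" for i
    proof -
      have "coord (\<Sum>j\<in>idx n. scale (c (w j)) (w j)) i = 0"
        using lincomb by simp
      then show ?thesis
        using i by (simp add: coord_sum coord_scale coord_w mult.commute cong: sum.cong)
    qed
    have "c (w k) = 0" if k: "k \<in> idx n" for k
    proof -
      have "c (w k) = (\<Sum>j\<in>idx n. (\<Sum>i\<in>idx n. Q k i * P i j) * c (w j))"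
        using k by (simp add: QP if_distrib[of "\<lambda>z. z * _"] cong: if_cong)
      also have "\<dots> = (\<Sum>i\<in>idx n. Q k i * (\<Sum>j\<in>idx n. P i j * c (w j)))"
        by (simp add: sum_distrib_right sum_distrib_left mult.assoc, subst sum.swap, simp)
      also have "\<dots> = 0"
        by (simp add: zero)
      finally show ?thesis .
    qed
    then show False
      using c1 by auto
  qed
  with inj spanning show ?thesis
    by (simp add: is_basis_fam_def)
qed

end

section \<open>Preorders on the index set and their classes\<close>

locale idx_preorder =
  fixes n :: nat and \<rho> :: "nat \<Rightarrow> nat \<Rightarrow> bool"
  assumes preorder: "preorder_on_idx n \<rho>"
begin

lemma rho_refl: "i \<in> idx n \<Longrightarrow> \<rho> i i"
  using preorder by (auto simp: preorder_on_idx_def)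

lemma rho_trans: "i \<in> idx n \<Longrightarrow> j \<in> idx n \<Longrightarrow> r \<in> idx n \<Longrightarrow> \<rho> i j \<Longrightarrow> \<rho> j r \<Longrightarrow> \<rho> i r"
  using preorder unfolding preorder_on_idx_def by blast

lemma cls_self: "i \<in> idx n \<Longrightarrow> i \<in> cls n \<rho> i"
  by (simp add: cls_def rho_refl)

lemma cls_subset: "cls n \<rho> i \<subseteq> idx n"
  by (auto simp: cls_def)

lemma finite_cls [simp]: "finite (cls n \<rho> i)"
  by (rule finite_subset[OF cls_subset]) simp

lemma cls_eq_iff:
  assumes "i \<in> idx n" "j \<in> idx n"
  shows "cls n \<rho> i = cls n \<rho> j \<longleftrightarrow> \<rho> i j \<and> \<rho> j i"
proof
  assume "cls n \<rho> i = cls n \<rho> j"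
  then have "i \<in> cls n \<rho> j"
    using cls_self[OF assms(1)] by simp
  then show "\<rho> i j \<and> \<rho> j i"
    unfolding cls_def by simp
next
  assume "\<rho> i j \<and> \<rho> j i"
  then show "cls n \<rho> i = cls n \<rho> j"
    unfolding cls_def using assms rho_trans by blast
qed

lemma cls_eq_of_mem:
  assumes "k \<in> cls n \<rho> i" "i \<in> idx n"
  shows "cls n \<rho> k = cls n \<rho> i"
proof -
  have "k \<in> idx n" "\<rho> i k" "\<rho> k i"
    using assms(1) by (auto simp: cls_def)
  then show ?thesis
    using cls_eq_iff[of k i] assms(2) by simp
qed

lemma cle_cls_iff:
  assumes i: "i \<in> idx n" and j: "j \<in> idx n"
  shows "cle \<rho> (cls n \<rho> i) (cls n \<rho> j) \<longleftrightarrow> \<rho> i j"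
proof
  assume "cle \<rho> (cls n \<rho> i) (cls n \<rho> j)"
  then obtain a b where "a \<in> idx n" "b \<in> idx n" "\<rho> i a" "\<rho> a b" "\<rho> b j"
    by (auto simp: cle_def cls_def)
  then show "\<rho> i j"
    using i j rho_trans by meson
next
  assume "\<rho> i j"
  then show "cle \<rho> (cls n \<rho> i) (cls n \<rho> j)"
    unfolding cle_def using cls_self i j by blast
qed

lemma ClsI: "i \<in> idx n \<Longrightarrow> cls n \<rho> i \<in> Cls n \<rho>"
  by (simp add: Cls_def)

lemma ClsE: "\<alpha> \<in> Cls n \<rho> \<Longrightarrow> (\<And>i. i \<in> idx n \<Longrightarrow> \<alpha> = cls n \<rho> i \<Longrightarrow> P) \<Longrightarrow> P"
  by (auto simp: Cls_def)

lemma Cls_memD: "\<alpha> \<in> Cls n \<rho> \<Longrightarrow> x \<in> \<alpha> \<Longrightarrow> \<alpha> = cls n \<rho> x \<and> x \<in> idx n"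
  by (auto simp: Cls_def cls_eq_of_mem dest: cls_subset[THEN subsetD])

lemma cle_refl: "\<alpha> \<in> Cls n \<rho> \<Longrightarrow> cle \<rho> \<alpha> \<alpha>"
  by (elim ClsE) (simp add: cle_cls_iff rho_refl)

lemma cle_trans:
  "\<alpha> \<in> Cls n \<rho> \<Longrightarrow> \<beta> \<in> Cls n \<rho> \<Longrightarrow> \<gamma> \<in> Cls n \<rho> \<Longrightarrow> cle \<rho> \<alpha> \<beta> \<Longrightarrow> cle \<rho> \<beta> \<gamma> \<Longrightarrow> cle \<rho> \<alpha> \<gamma>"
  by (elim ClsE) (simp add: cle_cls_iff, meson rho_trans)

lemma cle_antisym: "\<alpha> \<in> Cls n \<rho> \<Longrightarrow> \<beta> \<in> Cls n \<rho> \<Longrightarrow> cle \<rho> \<alpha> \<beta> \<Longrightarrow> cle \<rho> \<beta> \<alpha> \<Longrightarrow> \<alpha> = \<beta>"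
  by (elim ClsE) (simp add: cle_cls_iff cls_eq_iff)

lemma restrict_id_Aut0: "restrict id (Cls n \<rho>) \<in> Aut0 n \<rho>"
proof -
  have "bij_betw (restrict id (Cls n \<rho>)) (Cls n \<rho>) (Cls n \<rho>)"
    by (rule bij_betw_cong[THEN iffD2, OF _ bij_betw_id]) simp
  then show ?thesis
    by (simp add: Aut0_def)
qed

context
  fixes g assumes g: "g \<in> Aut0 n \<rho>"
begin

lemma Aut0_bij: "bij_betw g (Cls n \<rho>) (Cls n \<rho>)"
  and Aut0_card: "\<alpha> \<in> Cls n \<rho> \<Longrightarrow> card (g \<alpha>) = card \<alpha>"
  and Aut0_cle_iff: "\<alpha> \<in> Cls n \<rho> \<Longrightarrow> \<beta> \<in> Cls n \<rho> \<Longrightarrow> cle \<rho> \<alpha> \<beta> \<longleftrightarrow> cle \<rho> (g \<alpha>) (g \<beta>)"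
  using g by (auto simp: Aut0_def)

lemma Aut0_Cls: "\<alpha> \<in> Cls n \<rho> \<Longrightarrow> g \<alpha> \<in> Cls n \<rho>"
  using Aut0_bij bij_betwE by blast

lemma rank_in_cls_less:
  assumes j: "j \<in> idx n"
  shows "card {t \<in> cls n \<rho> j. t < j} < card (g (cls n \<rho> j))"
proof -
  have "card {t \<in> cls n \<rho> j. t < j} < card (cls n \<rho> j)"
    by (rule psubset_card_mono) (use cls_self[OF j] in auto)
  then show ?thesis
    using Aut0_card[OF ClsI[OF j]] by simp
qed

lemma gtilde_in_image:
  assumes j: "j \<in> idx n"
  shows "gtilde n \<rho> g j \<in> g (cls n \<rho> j)"
proof -
  have fin: "finite (g (cls n \<rho> j))"
    using Aut0_Cls[OF ClsI[OF j]] by (auto elim: ClsE)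
  have "card {t \<in> cls n \<rho> j. t < j} < length (sorted_list_of_set (g (cls n \<rho> j)))"
    using rank_in_cls_less[OF j] by simp
  then show ?thesis
    unfolding gtilde_def using nth_mem fin by (metis set_sorted_list_of_set)
qed

lemma gtilde_idx: "j \<in> idx n \<Longrightarrow> gtilde n \<rho> g j \<in> idx n"
  using gtilde_in_image Aut0_Cls[OF ClsI] Cls_memD by blast

lemma cls_gtilde: "j \<in> idx n \<Longrightarrow> cls n \<rho> (gtilde n \<rho> g j) = g (cls n \<rho> j)"
  using gtilde_in_image Aut0_Cls[OF ClsI] Cls_memD by metis

lemma inj_on_gtilde: "inj_on (gtilde n \<rho> g) (idx n)"
proof (rule inj_onI)
  fix i j assume i: "i \<in> idx n" and j: "j \<in> idx n" and eq: "gtilde n \<rho> g i = gtilde n \<rho> g j"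
  have "g (cls n \<rho> i) = g (cls n \<rho> j)"
    using cls_gtilde[OF i] cls_gtilde[OF j] eq by simp
  then have c: "cls n \<rho> i = cls n \<rho> j"
    using Aut0_bij ClsI i j by (metis bij_betw_def inj_onD)
  let ?L = "sorted_list_of_set (g (cls n \<rho> j))"
  let ?rank = "\<lambda>i. card {t \<in> cls n \<rho> j. t < i}"
  have "?L ! ?rank i = ?L ! ?rank j"
    using eq c unfolding gtilde_def by simp
  moreover have "?rank i < length ?L" "?rank j < length ?L"
    using rank_in_cls_less[OF i] rank_in_cls_less[OF j] c by simp_all
  ultimately have ranks: "?rank i = ?rank j"
    using distinct_sorted_list_of_set nth_eq_iff_index_eq by blast
  have "i \<in> cls n \<rho> j" "j \<in> cls n \<rho> j"
    using c cls_self[OF i] cls_self[OF j] by simp_all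
  then have "i < j \<Longrightarrow> ?rank i < ?rank j" "j < i \<Longrightarrow> ?rank j < ?rank i"
    by (auto intro!: psubset_card_mono)
  with ranks show "i = j"
    by (metis linorder_neqE_nat less_irrefl)
qed

lemma bij_betw_gtilde: "bij_betw (gtilde n \<rho> g) (idx n) (idx n)"
proof -
  have "gtilde n \<rho> g ` idx n \<subseteq> idx n" "card (gtilde n \<rho> g ` idx n) = card (idx n)"
    using gtilde_idx inj_on_gtilde card_image by blast+
  then show ?thesis
    using inj_on_gtilde by (simp add: bij_betw_def card_subset_eq)
qed

end

lemma EndF_iff_support_relabelled:
  assumes b: "coord_basis sc n u" and g: "g \<in> Aut0 n \<rho>"
    and Vf: "\<forall>\<beta>\<in>Cls n \<rho>. Vf \<beta> = module.span sc (u ` {r\<in>idx n. cle \<rho> (g (cls n \<rho> r)) \<beta>})"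
  shows "f \<in> EndF sc n \<rho> Vf \<longleftrightarrow> Vector_Spaces.linear sc sc f \<and>
     (\<forall>r\<in>idx n. \<forall>t\<in>idx n. coord_basis.mat_of sc n u f r t \<noteq> 0 \<longrightarrow> \<rho> r t)"
proof (rule coord_basis.EndF_iff_mat_support[OF b Vf])
  have "cle \<rho> (g (cls n \<rho> r)) (g (cls n \<rho> t)) \<longleftrightarrow> \<rho> r t" if "r \<in> idx n" "t \<in> idx n" for r t
    using Aut0_cle_iff[OF g ClsI ClsI] cle_cls_iff that by simp
  then show "\<forall>t\<in>idx n. \<exists>\<beta>\<in>Cls n \<rho>. \<forall>r\<in>idx n. cle \<rho> (g (cls n \<rho> r)) \<beta> = \<rho> r t"
    using Aut0_Cls[OF g ClsI] by blast
  show "\<forall>\<beta>\<in>Cls n \<rho>. \<forall>r\<in>idx n. \<forall>t\<in>idx n.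
      cle \<rho> (g (cls n \<rho> t)) \<beta> \<longrightarrow> \<rho> r t \<longrightarrow> cle \<rho> (g (cls n \<rho> r)) \<beta>"
  proof (intro ballI impI)
    fix \<beta> r t assume \<beta>: "\<beta> \<in> Cls n \<rho>" and r: "r \<in> idx n" and t: "t \<in> idx n"
      and t\<beta>: "cle \<rho> (g (cls n \<rho> t)) \<beta>" and "\<rho> r t"
    then have "cle \<rho> (g (cls n \<rho> r)) (g (cls n \<rho> t))"
      using Aut0_cle_iff[OF g ClsI[OF r] ClsI[OF t]] cle_cls_iff[OF r t] by simp
    then show "cle \<rho> (g (cls n \<rho> r)) \<beta>"
      using cle_trans[OF Aut0_Cls[OF g ClsI[OF r]] Aut0_Cls[OF g ClsI[OF t]] \<beta>] t\<beta> by blast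
  qed
  show "\<forall>t\<in>idx n. \<rho> t t"
    using rho_refl by blast
qed

lemma EndF_iff_support:
  assumes b: "coord_basis sc n u" and Vf: "adapted_flag sc n \<rho> Vf u"
  shows "f \<in> EndF sc n \<rho> Vf \<longleftrightarrow> Vector_Spaces.linear sc sc f \<and>
     (\<forall>r\<in>idx n. \<forall>t\<in>idx n. coord_basis.mat_of sc n u f r t \<noteq> 0 \<longrightarrow> \<rho> r t)"
proof (rule EndF_iff_support_relabelled[OF b restrict_id_Aut0])
  have "{r\<in>idx n. cle \<rho> (restrict id (Cls n \<rho>) (cls n \<rho> r)) \<beta>} = {r\<in>idx n. cle \<rho> (cls n \<rho> r) \<beta>}"
    for \<beta>
    using ClsI by auto
  then show "\<forall>\<beta>\<in>Cls n \<rho>. Vf \<beta> =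
      module.span sc (u ` {r\<in>idx n. cle \<rho> (restrict id (Cls n \<rho>) (cls n \<rho> r)) \<beta>})"
    using Vf by (simp add: adapted_flag_def)
qed

end

section \<open>Matrix units and twisting by multiplicative families\<close>

definition matunit :: "nat \<Rightarrow> nat \<Rightarrow> nat \<Rightarrow> nat \<Rightarrow> 'k::field" where
  "matunit i j = (\<lambda>r t. if r = i \<and> t = j then 1 else 0)"

lemma matunit_Mrho: "i \<in> idx n \<Longrightarrow> j \<in> idx n \<Longrightarrow> \<rho> i j \<Longrightarrow> matunit i j \<in> Mrho n \<rho>"
  by (auto simp: matunit_def Mrho_def)

lemma matunit_matmul:
  "j \<in> idx n \<Longrightarrow> matmul n (matunit i j) (matunit k l) = (if j = k then matunit i l else (\<lambda>_ _. 0))"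
  by (auto simp: matmul_def matunit_def fun_eq_iff if_distrib[of "\<lambda>x. x * _"] cong: if_cong)

lemma matunit_sandwich: "i \<in> idx n \<Longrightarrow> j \<in> idx n \<Longrightarrow>
    matmul n (matunit i i) (matmul n M (matunit j j)) = (\<lambda>r t. M i j * matunit i j r t)"
  by (auto simp: matmul_def matunit_def fun_eq_iff if_distrib[of "\<lambda>x. x * _"]
      if_distrib[of "\<lambda>x. _ * x"] cong: if_cong)

lemma (in coord_basis) lin_of_mat_matunit:
  assumes i: "i \<in> idx n" and j: "j \<in> idx n"
  shows "lin_of_mat (matunit i j) z = scale (coord z j) (u i)"
proof -
  have "lin_of_mat (matunit i j) z = (\<Sum>r\<in>idx n. scale (if r = i then coord z j else 0) (u r))"
    unfolding lin_of_mat_def matunit_def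
    by (intro sum.cong refl arg_cong2[where f=scale]) (simp add: if_distrib[of "\<lambda>x. x * _"] j cong: if_cong)
  also have "\<dots> = scale (coord z j) (u i)"
    using i by (simp add: if_distrib[of "\<lambda>x. scale x _"] cong: if_cong)
  finally show ?thesis .
qed

definition hadamard :: "(nat \<Rightarrow> nat \<Rightarrow> 'k::field) \<Rightarrow> (nat \<Rightarrow> nat \<Rightarrow> 'k) \<Rightarrow> nat \<Rightarrow> nat \<Rightarrow> 'k" where
  "hadamard a M = (\<lambda>i j. a i j * M i j)"

lemma hadamard_Mrho: "a \<in> Tfam n \<rho> \<Longrightarrow> hadamard a M \<in> Mrho n \<rho>"
  by (auto simp: hadamard_def Mrho_def Tfam_def)

lemma hadamard_inverse_Mrho: "a \<in> Tfam n \<rho> \<Longrightarrow> hadamard (\<lambda>i j. inverse (a i j)) M \<in> Mrho n \<rho>"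
  by (auto simp: hadamard_def Mrho_def Tfam_def)

lemma hadamard_inverse_cancel:
  "a \<in> Tfam n \<rho> \<Longrightarrow> M \<in> Mrho n \<rho> \<Longrightarrow> hadamard (\<lambda>i j. inverse (a i j)) (hadamard a M) = M"
  by (force simp: hadamard_def Mrho_def Tfam_def fun_eq_iff)

lemma hadamard_cancel_inverse:
  "a \<in> Tfam n \<rho> \<Longrightarrow> M \<in> Mrho n \<rho> \<Longrightarrow> hadamard a (hadamard (\<lambda>i j. inverse (a i j)) M) = M"
  by (force simp: hadamard_def Mrho_def Tfam_def fun_eq_iff)

lemma Tfam_diag: "a \<in> Tfam n \<rho> \<Longrightarrow> i \<in> idx n \<Longrightarrow> \<rho> i i \<Longrightarrow> a i i = 1"
  by (auto simp: Tfam_def) (metis mult_cancel_right2)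

lemma hadamard_matone:
  assumes a: "a \<in> Tfam n \<rho>" and refl: "\<And>i. i \<in> idx n \<Longrightarrow> \<rho> i i"
  shows "hadamard a (matone n) = matone n"
  using Tfam_diag[OF a _ refl] by (auto simp: hadamard_def matone_def fun_eq_iff)

lemma hadamard_matmul:
  assumes a: "a \<in> Tfam n \<rho>" and M: "M \<in> Mrho n \<rho>" and N: "N \<in> Mrho n \<rho>"
  shows "hadamard a (matmul n M N) = matmul n (hadamard a M) (hadamard a N)"
proof (intro ext)
  fix i k
  have entry: "a i k * (M i t * N t k) = (a i t * M i t) * (a t k * N t k)" for t
  proof (cases "M i t * N t k = 0")
    case False
    then have "i \<in> idx n" "t \<in> idx n" "k \<in> idx n" "\<rho> i t" "\<rho> t k"
      using M N by (auto simp: Mrho_def)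
    then have "a i t * a t k = a i k"
      using a by (auto simp: Tfam_def)
    then show ?thesis
      by (simp add: algebra_simps)
  qed auto
  have "(\<Sum>t\<in>idx n. a i k * (M i t * N t k)) = (\<Sum>t\<in>idx n. (a i t * M i t) * (a t k * N t k))"
    by (intro sum.cong refl entry)
  then show "hadamard a (matmul n M N) i k = matmul n (hadamard a M) (hadamard a N) i k"
    by (simp add: hadamard_def matmul_def sum_distrib_left)
qed

section \<open>Endomorphism algebras of the two flags\<close>

locale flag_pair = idx_preorder n \<rho> for n \<rho> +
  fixes s :: "'k::field \<Rightarrow> 'v::ab_group_add \<Rightarrow> 'v" and s' :: "'k \<Rightarrow> 'w::ab_group_add \<Rightarrow> 'w"
    and Vf :: "nat set \<Rightarrow> 'v set" and Vf' :: "nat set \<Rightarrow> 'w set"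
    and v :: "nat \<Rightarrow> 'v" and v' :: "nat \<Rightarrow> 'w"
  assumes vs: "vector_space s" and vs': "vector_space s'"
    and flag: "adapted_flag s n \<rho> Vf v" and flag': "adapted_flag s' n \<rho> Vf' v'"
begin

sublocale V: coord_basis s n v
  using vs flag by (simp add: coord_basis_def coord_basis_axioms_def adapted_flag_def)

sublocale V': coord_basis s' n v'
  using vs' flag' by (simp add: coord_basis_def coord_basis_axioms_def adapted_flag_def)

abbreviation EndV where "EndV \<equiv> EndF s n \<rho> Vf"
abbreviation EndV' where "EndV' \<equiv> EndF s' n \<rho> Vf'"

lemma EndV_iff: "f \<in> EndV \<longleftrightarrow> Vector_Spaces.linear s s f \<and>
     (\<forall>r\<in>idx n. \<forall>t\<in>idx n. V.mat_of f r t \<noteq> 0 \<longrightarrow> \<rho> r t)"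
  by (rule EndF_iff_support[OF V.coord_basis_axioms flag])

lemma EndV'_iff: "f \<in> EndV' \<longleftrightarrow> Vector_Spaces.linear s' s' f \<and>
     (\<forall>r\<in>idx n. \<forall>t\<in>idx n. V'.mat_of f r t \<noteq> 0 \<longrightarrow> \<rho> r t)"
  by (rule EndF_iff_support[OF V'.coord_basis_axioms flag'])

lemma EndV_linear: "f \<in> EndV \<Longrightarrow> Vector_Spaces.linear s s f"
  using EndV_iff by blast

lemma mat_of_EndV: "f \<in> EndV \<Longrightarrow> V.mat_of f \<in> Mrho n \<rho>"
  using EndV_iff by (auto simp: Mrho_def V.mat_of_def split: if_splits)

lemma lin_of_mat_EndV: "M \<in> Mrho n \<rho> \<Longrightarrow> V.lin_of_mat M \<in> EndV"
  unfolding EndV_iff using V.linear_lin_of_mat V.mat_of_lin_of_mat_entry by (auto simp: Mrho_def)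

lemma EndV_zero: "(\<lambda>x. 0) \<in> EndV"
  unfolding EndV_iff by (simp add: Vector_Spaces.linear_iff V.mat_of_def vs)

lemma EndV_add:
  assumes "f \<in> EndV" "f2 \<in> EndV"
  shows "(\<lambda>x. f x + f2 x) \<in> EndV"
proof -
  have "Vector_Spaces.linear s s (\<lambda>x. f x + f2 x)"
    using assms EndV_linear by (simp add: Vector_Spaces.linear_iff V.scale_right_distrib add_ac)
  moreover have "\<rho> r t" if "r \<in> idx n" "t \<in> idx n" "V.mat_of (\<lambda>x. f x + f2 x) r t \<noteq> 0" for r t
  proof -
    have "V.mat_of f r t \<noteq> 0 \<or> V.mat_of f2 r t \<noteq> 0"
      using that(3) by (auto simp: V.mat_of_add)
    then show ?thesis
      using assms that EndV_iff by blast
  qed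
  ultimately show ?thesis
    unfolding EndV_iff by blast
qed

lemma EndV_scale: "f \<in> EndV \<Longrightarrow> (\<lambda>x. s c (f x)) \<in> EndV"
  unfolding EndV_iff
  by (auto simp: V.mat_of_scale Vector_Spaces.linear_iff V.scale_left_commute V.scale_right_distrib)

lemma EndV_comp:
  assumes f: "f \<in> EndV" and f2: "f2 \<in> EndV"
  shows "f \<circ> f2 \<in> EndV"
proof -
  have "V.mat_of (f \<circ> f2) = matmul n (V.mat_of f) (V.mat_of f2)"
    using V.mat_of_comp EndV_linear f f2 by blast
  then have "\<rho> r t" if r: "r \<in> idx n" and t: "t \<in> idx n" and nz: "V.mat_of (f \<circ> f2) r t \<noteq> 0" for r t
  proof -
    obtain k where k: "k \<in> idx n" "V.mat_of f r k * V.mat_of f2 k t \<noteq> 0"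
      using nz \<open>V.mat_of (f \<circ> f2) = _\<close> by (metis (no_types, lifting) matmul_def sum.neutral)
    then have "\<rho> r k" "\<rho> k t"
      using f f2 r t EndV_iff by auto
    then show ?thesis
      using rho_trans r t k by blast
  qed
  moreover have "Vector_Spaces.linear s s (f \<circ> f2)"
    using f f2 EndV_linear Vector_Spaces.linear_compose by blast
  ultimately show ?thesis
    unfolding EndV_iff by blast
qed

lemma EndV_id: "id \<in> EndV"
  unfolding EndV_iff using V.linear_id by (auto simp: V.mat_of_id matone_def rho_refl)

abbreviation Eop :: "nat \<Rightarrow> nat \<Rightarrow> 'v \<Rightarrow> 'v" where
  "Eop i j \<equiv> V.lin_of_mat (matunit i j)"

lemma Eop_EndV: "i \<in> idx n \<Longrightarrow> j \<in> idx n \<Longrightarrow> \<rho> i j \<Longrightarrow> Eop i j \<in> EndV"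
  using lin_of_mat_EndV matunit_Mrho by blast

lemma Eop_comp: "j \<in> idx n \<Longrightarrow> Eop i j \<circ> Eop k l = (if j = k then Eop i l else (\<lambda>x. 0))"
  by (simp add: V.lin_of_mat_matmul[symmetric] matunit_matmul V.lin_of_mat_zero)

lemma sum_Eop_diag: "(\<lambda>x. \<Sum>j\<in>idx n. Eop j j x) = id"
  by (simp add: V.lin_of_mat_matunit V.coord_expansion fun_eq_iff cong: sum.cong)

lemma Eop_sandwich:
  assumes H: "H \<in> EndV" and i: "i \<in> idx n" and j: "j \<in> idx n"
  shows "Eop i i \<circ> (H \<circ> Eop j j) = (\<lambda>x. s (V.mat_of H i j) (Eop i j x))"
proof -
  have "H = V.lin_of_mat (V.mat_of H)"
    using V.lin_of_mat_mat_of EndV_linear H by metis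
  then have "Eop i i \<circ> (H \<circ> Eop j j) = V.lin_of_mat (matmul n (matunit i i) (matmul n (V.mat_of H) (matunit j j)))"
    by (metis V.lin_of_mat_matmul)
  also have "\<dots> = V.lin_of_mat (\<lambda>r t. V.mat_of H i j * matunit i j r t)"
    using matunit_sandwich i j by metis
  finally show ?thesis
    by (simp add: V.lin_of_mat_scale[symmetric] fun_eq_iff)
qed

lemma Eop_nonzero: "i \<in> idx n \<Longrightarrow> j \<in> idx n \<Longrightarrow> Eop i j \<noteq> (\<lambda>x. 0)"
  using V.lin_of_mat_matunit V.coord_basis_vec V.basis_nonzero by (metis V.scale_one)

abbreviation rho_pairs :: "(nat \<times> nat) set" where
  "rho_pairs \<equiv> {(i, j). i \<in> idx n \<and> j \<in> idx n \<and> \<rho> i j}"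

lemma finite_rho_pairs: "finite rho_pairs"
  by (rule finite_subset[of _ "idx n \<times> idx n"]) auto

lemma EndV_expansion:
  assumes f: "f \<in> EndV"
  shows "f = (\<lambda>x. \<Sum>(i, j)\<in>rho_pairs. s (V.mat_of f i j) (Eop i j x))"
proof
  fix x
  have "f x = V.lin_of_mat (V.mat_of f) x"
    using V.lin_of_mat_mat_of EndV_linear f by metis
  also have "\<dots> = (\<Sum>i\<in>idx n. \<Sum>j\<in>idx n. s (V.mat_of f i j) (Eop i j x))"
    unfolding V.lin_of_mat_def[of "V.mat_of f"]
    by (simp add: V.lin_of_mat_matunit V.scale_sum_left cong: sum.cong)
  also have "\<dots> = (\<Sum>(i, j)\<in>idx n \<times> idx n. s (V.mat_of f i j) (Eop i j x))"
    by (simp add: sum.cartesian_product)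
  also have "\<dots> = (\<Sum>(i, j)\<in>rho_pairs. s (V.mat_of f i j) (Eop i j x))"
    using f EndV_iff by (intro sum.mono_neutral_right) auto
  finally show "f x = (\<Sum>(i, j)\<in>rho_pairs. s (V.mat_of f i j) (Eop i j x))" .
qed

end

context flag_pair
begin

context
  fixes \<phi> assumes \<phi>: "\<phi> \<in> Iso_alg s s' EndV EndV'"
begin

lemma iso_bij: "bij_betw \<phi> EndV EndV'"
  and iso_extensional: "\<phi> \<in> extensional EndV"
  and iso_add: "f \<in> EndV \<Longrightarrow> f2 \<in> EndV \<Longrightarrow> \<phi> (\<lambda>x. f x + f2 x) = (\<lambda>y. \<phi> f y + \<phi> f2 y)"
  and iso_scale: "f \<in> EndV \<Longrightarrow> \<phi> (\<lambda>x. s c (f x)) = (\<lambda>y. s' c (\<phi> f y))"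
  and iso_comp: "f \<in> EndV \<Longrightarrow> f2 \<in> EndV \<Longrightarrow> \<phi> (f \<circ> f2) = \<phi> f \<circ> \<phi> f2"
  and iso_id: "\<phi> id = id"
  using \<phi> by (auto simp: Iso_alg_def)

lemma iso_EndV': "f \<in> EndV \<Longrightarrow> \<phi> f \<in> EndV'"
  using iso_bij bij_betwE by blast

lemma iso_zero: "\<phi> (\<lambda>x. 0) = (\<lambda>y. 0)"
proof
  fix y
  have "\<phi> (\<lambda>x. 0 + 0) = (\<lambda>y. \<phi> (\<lambda>x. 0) y + \<phi> (\<lambda>x. 0) y)"
    using iso_add EndV_zero by blast
  then show "\<phi> (\<lambda>x. 0) y = 0"
    by (metis add_0 add_cancel_right_right)
qed

lemma iso_sum:
  assumes "finite K" "\<And>k. k \<in> K \<Longrightarrow> F k \<in> EndV"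
  shows "(\<lambda>x. \<Sum>k\<in>K. F k x) \<in> EndV \<and> \<phi> (\<lambda>x. \<Sum>k\<in>K. F k x) = (\<lambda>y. \<Sum>k\<in>K. \<phi> (F k) y)"
  using assms
proof (induction K rule: finite_induct)
  case empty
  then show ?case
    using EndV_zero iso_zero by simp
next
  case (insert k K)
  then have IH: "(\<lambda>x. \<Sum>k\<in>K. F k x) \<in> EndV" "\<phi> (\<lambda>x. \<Sum>k\<in>K. F k x) = (\<lambda>y. \<Sum>k\<in>K. \<phi> (F k) y)"
    and Fk: "F k \<in> EndV" by auto
  have "(\<lambda>x. F k x + (\<Sum>k\<in>K. F k x)) \<in> EndV"
    using EndV_add[OF Fk IH(1)] .
  moreover have "\<phi> (\<lambda>x. F k x + (\<Sum>k\<in>K. F k x)) = (\<lambda>y. \<phi> (F k) y + (\<Sum>k\<in>K. \<phi> (F k) y))"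
    using iso_add[OF Fk IH(1)] IH(2) by simp
  ultimately show ?case
    using insert.hyps by simp
qed

lemma iso_expansion:
  assumes f: "f \<in> EndV"
  shows "\<phi> f = (\<lambda>y. \<Sum>(i, j)\<in>rho_pairs. s' (V.mat_of f i j) (\<phi> (Eop i j) y))"
proof -
  have terms: "(\<lambda>x. s (V.mat_of f i j) (Eop i j x)) \<in> EndV" if "(i, j) \<in> rho_pairs" for i j
    using that EndV_scale Eop_EndV by auto
  have "\<phi> f = \<phi> (\<lambda>x. \<Sum>(i, j)\<in>rho_pairs. s (V.mat_of f i j) (Eop i j x))"
    using EndV_expansion[OF f] by simp
  also have "\<dots> = (\<lambda>y. \<Sum>(i, j)\<in>rho_pairs. \<phi> (\<lambda>x. s (V.mat_of f i j) (Eop i j x)) y)"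
    using iso_sum[OF finite_rho_pairs, of "\<lambda>(i, j) x. s (V.mat_of f i j) (Eop i j x)"] terms
    by (simp add: case_prod_beta')
  also have "\<dots> = (\<lambda>y. \<Sum>(i, j)\<in>rho_pairs. s' (V.mat_of f i j) (\<phi> (Eop i j) y))"
    using iso_scale Eop_EndV by (intro ext sum.cong refl) auto
  finally show ?thesis .
qed

end

lemma Iso_alg_eqI:
  assumes \<psi>1: "\<psi>1 \<in> Iso_alg s s' EndV EndV'" and \<psi>2: "\<psi>2 \<in> Iso_alg s s' EndV EndV'"
    and eq: "\<And>i j. i \<in> idx n \<Longrightarrow> j \<in> idx n \<Longrightarrow> \<rho> i j \<Longrightarrow> \<psi>1 (Eop i j) = \<psi>2 (Eop i j)"
  shows "\<psi>1 = \<psi>2"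
proof (rule extensionalityI[OF iso_extensional[OF \<psi>1] iso_extensional[OF \<psi>2]])
  fix f assume "f \<in> EndV"
  then show "\<psi>1 f = \<psi>2 f"
    using iso_expansion[OF \<psi>1] iso_expansion[OF \<psi>2] eq by (auto intro!: ext sum.cong)
qed

end

section \<open>The isomorphism attached to a triple\<close>

locale flag_triple = flag_pair +
  fixes A :: "nat \<Rightarrow> nat \<Rightarrow> 'a" and g :: "nat set \<Rightarrow> nat set" and a :: "nat \<Rightarrow> nat \<Rightarrow> 'a"
  assumes triple: "(A, g, a) \<in> Triples n \<rho>"
begin

lemma A_Umat: "A \<in> Umat n \<rho>" and g_Aut0: "g \<in> Aut0 n \<rho>" and a_Tfam: "a \<in> Tfam n \<rho>"
  using triple by (auto simp: Triples_def)

abbreviation gt where "gt \<equiv> gtilde n \<rho> g"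
abbreviation w where "w \<equiv> wvec s' n \<rho> v' A g"

lemma A_inverse:
  obtains B where "B \<in> Mrho n \<rho>" "matmul n A B = matone n" "matmul n B A = matone n"
  using A_Umat by (auto simp: Umat_def)

lemma A_support: "A i t \<noteq> 0 \<Longrightarrow> i \<in> idx n \<and> t \<in> idx n \<and> \<rho> i t"
  using A_Umat by (auto simp: Umat_def Mrho_def)

lemma a_support: "a i j \<noteq> 0 \<Longrightarrow> i \<in> idx n \<and> j \<in> idx n \<and> \<rho> i j"
  using a_Tfam by (auto simp: Tfam_def)

lemma a_nonzero: "i \<in> idx n \<Longrightarrow> j \<in> idx n \<Longrightarrow> \<rho> i j \<Longrightarrow> a i j \<noteq> 0"
  using a_Tfam by (auto simp: Tfam_def)

lemma a_diag: "i \<in> idx n \<Longrightarrow> a i i = 1"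
  using Tfam_diag[OF a_Tfam] rho_refl by blast

lemma wvec_eq: "j \<in> idx n \<Longrightarrow> w j = (\<Sum>i\<in>idx n. s' (A i (gt j)) (v' i))"
  by (simp add: wvec_def matg_def)

lemma coord_v'_wvec: "i \<in> idx n \<Longrightarrow> j \<in> idx n \<Longrightarrow> V'.coord (w j) i = matg n \<rho> A g i j"
  by (simp add: wvec_def V'.coord_lincomb)

lemma matmul_gtilde_inverse:
  assumes B: "B \<in> Mrho n \<rho>" "matmul n A B = matone n" "matmul n B A = matone n"
  shows "\<And>i r. i \<in> idx n \<Longrightarrow> r \<in> idx n \<Longrightarrow> (\<Sum>j\<in>idx n. A i (gt j) * B (gt j) r) = (if i = r then 1 else 0)"
    and "\<And>j k. j \<in> idx n \<Longrightarrow> k \<in> idx n \<Longrightarrow> (\<Sum>i\<in>idx n. B (gt j) i * A i (gt k)) = (if j = k then 1 else 0)"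
proof -
  fix i r assume i: "i \<in> idx n" and r: "r \<in> idx n"
  have "(\<Sum>j\<in>idx n. A i (gt j) * B (gt j) r) = matmul n A B i r"
    using sum.reindex_bij_betw[OF bij_betw_gtilde[OF g_Aut0], of "\<lambda>t. A i t * B t r"]
    by (simp add: matmul_def)
  then show "(\<Sum>j\<in>idx n. A i (gt j) * B (gt j) r) = (if i = r then 1 else 0)"
    using B i by (simp add: matone_def)
next
  fix j k assume j: "j \<in> idx n" and k: "k \<in> idx n"
  have "(\<Sum>i\<in>idx n. B (gt j) i * A i (gt k)) = matmul n B A (gt j) (gt k)"
    by (simp add: matmul_def)
  also have "\<dots> = (if gt j = gt k then 1 else 0)"
    using B gtilde_idx[OF g_Aut0 j] by (simp add: matone_def)
  also have "\<dots> = (if j = k then 1 else 0)"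
    using inj_on_gtilde[OF g_Aut0] j k by (auto simp: inj_on_def)
  finally show "(\<Sum>i\<in>idx n. B (gt j) i * A i (gt k)) = (if j = k then 1 else 0)" .
qed

lemma basis_wvec: "is_basis_fam s' n w"
proof -
  obtain B where B: "B \<in> Mrho n \<rho>" "matmul n A B = matone n" "matmul n B A = matone n"
    by (rule A_inverse)
  show ?thesis
    by (rule V'.basis_change_is_basis[where P="\<lambda>i j. A i (gt j)" and Q="\<lambda>j i. B (gt j) i"])
      (use matmul_gtilde_inverse[OF B] wvec_eq in auto)
qed

sublocale W: coord_basis s' n w
  using vs' basis_wvec by (simp add: coord_basis_def coord_basis_axioms_def)

lemma coord_wvec:
  assumes B: "B \<in> Mrho n \<rho>" "matmul n A B = matone n" "matmul n B A = matone n"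
    and j: "j \<in> idx n"
  shows "W.coord x j = (\<Sum>i\<in>idx n. B (gt j) i * V'.coord x i)"
proof -
  have "x = (\<Sum>j\<in>idx n. s' (\<Sum>i\<in>idx n. B (gt j) i * V'.coord x i) (w j))"
    by (rule V'.basis_change_expansion[where P="\<lambda>i j. A i (gt j)"])
      (use matmul_gtilde_inverse[OF B] wvec_eq in auto)
  then have "W.coord x j = W.coord (\<Sum>j\<in>idx n. s' (\<Sum>i\<in>idx n. B (gt j) i * V'.coord x i) (w j)) j"
    by simp
  also have "\<dots> = (\<Sum>i\<in>idx n. B (gt j) i * V'.coord x i)"
    using j by (rule W.coord_lincomb)
  finally show ?thesis .
qed

lemma Vf'_span_wvec: "\<forall>\<beta>\<in>Cls n \<rho>. Vf' \<beta> = V'.span (w ` {j\<in>idx n. cle \<rho> (g (cls n \<rho> j)) \<beta>})"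
proof
  fix \<beta> assume \<beta>: "\<beta> \<in> Cls n \<rho>"
  obtain B where B: "B \<in> Mrho n \<rho>" "matmul n A B = matone n" "matmul n B A = matone n"
    by (rule A_inverse)
  let ?D = "{r\<in>idx n. cle \<rho> (cls n \<rho> r) \<beta>}"
  let ?S = "{j\<in>idx n. cle \<rho> (g (cls n \<rho> j)) \<beta>}"
  have "w j \<in> V'.span (v' ` ?D)" if j: "j \<in> ?S" for j
  proof -
    have "V'.coord (w j) i = 0" if i: "i \<in> idx n - ?D" for i
    proof (rule ccontr)
      assume "V'.coord (w j) i \<noteq> 0"
      then have "\<rho> i (gt j)"
        using i j coord_v'_wvec A_support by (auto simp: matg_def)
      then have "cle \<rho> (cls n \<rho> i) (g (cls n \<rho> j))"
        using cle_cls_iff[of i "gt j"] cls_gtilde[OF g_Aut0] i j gtilde_idx[OF g_Aut0] by auto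
      then show False
        using cle_trans[OF ClsI Aut0_Cls[OF g_Aut0 ClsI] \<beta>] i j by blast
    qed
    then show ?thesis
      using V'.in_span_basis_iff[of ?D] by auto
  qed
  then have "V'.span (w ` ?S) \<subseteq> V'.span (v' ` ?D)"
    by (intro V'.span_minimal) (auto simp: V'.subspace_span)
  moreover have "v' r \<in> V'.span (w ` ?S)" if r: "r \<in> ?D" for r
  proof -
    have "W.coord (v' r) j = 0" if j: "j \<in> idx n - ?S" for j
    proof (rule ccontr)
      assume "W.coord (v' r) j \<noteq> 0"
      then have "B (gt j) r \<noteq> 0"
        using coord_wvec[OF B, of j "v' r"] j r
        by (simp add: V'.coord_basis_vec if_distrib[of "\<lambda>z. _ * z"] cong: if_cong)
      then have "\<rho> (gt j) r"
        using B(1) by (auto simp: Mrho_def)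
      then have "cle \<rho> (g (cls n \<rho> j)) (cls n \<rho> r)"
        using cle_cls_iff[of "gt j" r] cls_gtilde[OF g_Aut0] r j gtilde_idx[OF g_Aut0] by auto
      then show False
        using cle_trans[OF Aut0_Cls[OF g_Aut0 ClsI] ClsI \<beta>] r j by blast
    qed
    then show ?thesis
      using W.in_span_basis_iff[of ?S] by auto
  qed
  then have "V'.span (v' ` ?D) \<subseteq> V'.span (w ` ?S)"
    by (intro V'.span_minimal) (auto simp: V'.subspace_span)
  ultimately show "Vf' \<beta> = V'.span (w ` ?S)"
    using flag' \<beta> by (auto simp: adapted_flag_def)
qed

lemma wvec_in_Vf'_iff:
  assumes \<beta>: "\<beta> \<in> Cls n \<rho>" and j: "j \<in> idx n"
  shows "w j \<in> Vf' \<beta> \<longleftrightarrow> cle \<rho> (g (cls n \<rho> j)) \<beta>"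
proof -
  let ?S = "{j\<in>idx n. cle \<rho> (g (cls n \<rho> j)) \<beta>}"
  have "w j \<in> Vf' \<beta> \<longleftrightarrow> (\<forall>r\<in>idx n - ?S. W.coord (w j) r = 0)"
    using Vf'_span_wvec \<beta> W.in_span_basis_iff[of ?S] by auto
  also have "\<dots> \<longleftrightarrow> j \<in> ?S"
    using j by (auto simp: W.coord_basis_vec)
  finally show ?thesis
    using j by simp
qed

lemma EndV'_iff_wvec: "f \<in> EndV' \<longleftrightarrow> Vector_Spaces.linear s' s' f \<and>
     (\<forall>r\<in>idx n. \<forall>t\<in>idx n. W.mat_of f r t \<noteq> 0 \<longrightarrow> \<rho> r t)"
  by (rule EndF_iff_support_relabelled[OF W.coord_basis_axioms g_Aut0 Vf'_span_wvec])

lemma EndV'_linear: "f \<in> EndV' \<Longrightarrow> Vector_Spaces.linear s' s' f"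
  using EndV'_iff by blast

lemma mat_of_EndV': "f \<in> EndV' \<Longrightarrow> W.mat_of f \<in> Mrho n \<rho>"
  using EndV'_iff_wvec by (auto simp: Mrho_def W.mat_of_def split: if_splits)

lemma lin_of_mat_EndV': "M \<in> Mrho n \<rho> \<Longrightarrow> W.lin_of_mat M \<in> EndV'"
  unfolding EndV'_iff_wvec using W.linear_lin_of_mat W.mat_of_lin_of_mat_entry by (auto simp: Mrho_def)

abbreviation Phi where "Phi \<equiv> Fmap s s' n \<rho> Vf v v' (A, g, a)"

lemma Fij_eq: "Fij s' n \<rho> v' A g a i j x = s' (W.coord x j * a i j) (w i)"
  by (simp add: Fij_def W.coord_def)

lemma Fmap_eq_hadamard:
  assumes f: "f \<in> EndV"
  shows "Phi f = W.lin_of_mat (hadamard a (V.mat_of f))"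
proof
  fix x
  let ?h = "\<lambda>i j. s' (V.mat_of f i j) (s' (W.coord x j * a i j) (w i))"
  have "Phi f x = (\<Sum>(i, j)\<in>rho_pairs. ?h i j)"
    using f by (auto simp: Fmap_def Fij_eq coordE_def V.mat_of_def V.coord_def intro!: sum.cong)
  also have "\<dots> = (\<Sum>(i, j)\<in>idx n \<times> idx n. ?h i j)"
    by (rule sum.mono_neutral_left) (auto dest: a_support)
  also have "\<dots> = W.lin_of_mat (hadamard a (V.mat_of f)) x"
    unfolding W.lin_of_mat_def hadamard_def sum.cartesian_product[symmetric]
    by (simp add: V'.scale_sum_left mult.commute mult.left_commute mult.assoc)
  finally show "Phi f x = W.lin_of_mat (hadamard a (V.mat_of f)) x" .
qed

lemma Fmap_Eop:
  assumes "i \<in> idx n" "j \<in> idx n" "\<rho> i j"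
  shows "Phi (Eop i j) = (\<lambda>z. s' (a i j * W.coord z j) (w i))"
proof -
  have "hadamard a (matunit i j) = (\<lambda>r t. a i j * matunit i j r t)"
    by (auto simp: hadamard_def matunit_def fun_eq_iff)
  then have "Phi (Eop i j) = W.lin_of_mat (\<lambda>r t. a i j * matunit i j r t)"
    using Fmap_eq_hadamard[OF Eop_EndV[OF assms]] V.mat_of_lin_of_mat[OF matunit_Mrho[where \<rho>=\<rho>, OF assms]] by simp
  then show ?thesis
    using W.lin_of_mat_scale W.lin_of_mat_matunit assms by auto
qed

lemma bij_betw_Fmap: "bij_betw Phi EndV EndV'"
proof -
  have Phi_eq: "Phi f = W.lin_of_mat (hadamard a (V.mat_of f))" if "f \<in> EndV" for f
    using Fmap_eq_hadamard that .
  have "inj_on Phi EndV"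
  proof (rule inj_onI)
    fix f f2 assume f: "f \<in> EndV" and f2: "f2 \<in> EndV" and "Phi f = Phi f2"
    then have "hadamard a (V.mat_of f) = hadamard a (V.mat_of f2)"
      using Phi_eq W.mat_of_lin_of_mat hadamard_Mrho[OF a_Tfam] by metis
    then have "V.mat_of f = V.mat_of f2"
      using hadamard_inverse_cancel[OF a_Tfam] mat_of_EndV f f2 by metis
    then show "f = f2"
      using V.lin_of_mat_mat_of EndV_linear f f2 by metis
  qed
  moreover have "Phi ` EndV = EndV'"
  proof
    show "Phi ` EndV \<subseteq> EndV'"
      using Phi_eq lin_of_mat_EndV' hadamard_Mrho[OF a_Tfam] by auto
    show "EndV' \<subseteq> Phi ` EndV"
    proof
      fix f' assume f': "f' \<in> EndV'"
      let ?M = "hadamard (\<lambda>i j. inverse (a i j)) (W.mat_of f')"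
      have M: "?M \<in> Mrho n \<rho>"
        using hadamard_inverse_Mrho[OF a_Tfam] .
      have "Phi (V.lin_of_mat ?M) = W.lin_of_mat (W.mat_of f')"
        using Phi_eq[OF lin_of_mat_EndV[OF M]] V.mat_of_lin_of_mat[OF M]
          hadamard_cancel_inverse[OF a_Tfam mat_of_EndV'[OF f']] by simp
      also have "\<dots> = f'"
        using W.lin_of_mat_mat_of EndV'_linear f' by blast
      finally show "f' \<in> Phi ` EndV"
        using lin_of_mat_EndV[OF M] by (metis image_eqI)
    qed
  qed
  ultimately show ?thesis
    by (simp add: bij_betw_def)
qed

lemma Fmap_Iso_alg: "Phi \<in> Iso_alg s s' EndV EndV'"
proof -
  have Phi_eq: "Phi f = W.lin_of_mat (hadamard a (V.mat_of f))" if "f \<in> EndV" for f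
    using Fmap_eq_hadamard that .
  have "Phi (\<lambda>x. f x + f2 x) = (\<lambda>y. Phi f y + Phi f2 y)" if f: "f \<in> EndV" "f2 \<in> EndV" for f f2
  proof -
    have "Phi (\<lambda>x. f x + f2 x) = W.lin_of_mat (hadamard a (V.mat_of (\<lambda>x. f x + f2 x)))"
      using Phi_eq EndV_add f by blast
    also have "hadamard a (V.mat_of (\<lambda>x. f x + f2 x)) =
        (\<lambda>i j. hadamard a (V.mat_of f) i j + hadamard a (V.mat_of f2) i j)"
      by (simp add: hadamard_def V.mat_of_add distrib_left)
    finally show ?thesis
      using Phi_eq f by (simp add: W.lin_of_mat_add)
  qed
  moreover have "Phi (\<lambda>x. s c (f x)) = (\<lambda>y. s' c (Phi f y))" if f: "f \<in> EndV" for f c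
  proof -
    have "Phi (\<lambda>x. s c (f x)) = W.lin_of_mat (hadamard a (V.mat_of (\<lambda>x. s c (f x))))"
      using Phi_eq EndV_scale f by blast
    also have "hadamard a (V.mat_of (\<lambda>x. s c (f x))) = (\<lambda>i j. c * hadamard a (V.mat_of f) i j)"
      by (simp add: hadamard_def V.mat_of_scale mult.left_commute)
    finally show ?thesis
      using Phi_eq f by (simp add: W.lin_of_mat_scale)
  qed
  moreover have "Phi (f \<circ> f2) = Phi f \<circ> Phi f2" if "f \<in> EndV" "f2 \<in> EndV" for f f2
  proof -
    have "hadamard a (V.mat_of (f \<circ> f2)) = matmul n (hadamard a (V.mat_of f)) (hadamard a (V.mat_of f2))"
      using V.mat_of_comp hadamard_matmul[OF a_Tfam] mat_of_EndV EndV_linear that by metis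
    then show ?thesis
      using Phi_eq EndV_comp that by (simp add: W.lin_of_mat_matmul)
  qed
  moreover have "Phi id = id"
    using Phi_eq[OF EndV_id] by (simp add: V.mat_of_id hadamard_matone[OF a_Tfam rho_refl] W.lin_of_mat_matone)
  moreover have "Phi \<in> extensional EndV"
    by (simp add: Fmap_def)
  ultimately show ?thesis
    using bij_betw_Fmap by (auto simp: Iso_alg_def)
qed

end

section \<open>When two triples give the same isomorphism\<close>

locale flag_triple_pair =
  X: flag_triple n \<rho> s s' Vf Vf' v v' A g a + Y: flag_triple n \<rho> s s' Vf Vf' v v' B h b
  for n \<rho> s s' Vf Vf' v v' A g a B h b
begin

lemma Fmap_Eop_eq_if_Fmap_eq:
  assumes eq: "X.Phi = Y.Phi" and ij: "i \<in> idx n" "j \<in> idx n" "\<rho> i j"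
  shows "s' (a i j * X.W.coord z j) (X.w i) = s' (b i j * Y.W.coord z j) (Y.w i)"
proof -
  have "(\<lambda>z. s' (a i j * X.W.coord z j) (X.w i)) = (\<lambda>z. s' (b i j * Y.W.coord z j) (Y.w i))"
    using X.Fmap_Eop[OF ij] Y.Fmap_Eop[OF ij] eq by simp
  then show ?thesis
    by (rule fun_cong)
qed

lemma wvec_rescaled_if_Fmap_eq:
  assumes eq: "X.Phi = Y.Phi"
  shows "\<exists>c. \<forall>j\<in>idx n. c j \<noteq> 0 \<and> X.w j = s' (c j) (Y.w j)"
proof -
  have "X.w j = s' (Y.W.coord (X.w j) j) (Y.w j) \<and> Y.W.coord (X.w j) j \<noteq> 0" if j: "j \<in> idx n" for j
  proof -
    have diag: "s' (X.W.coord z j) (X.w j) = s' (Y.W.coord z j) (Y.w j)" for z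
      using Fmap_Eop_eq_if_Fmap_eq[OF eq j j X.rho_refl[OF j]] X.a_diag[OF j] Y.a_diag[OF j] by simp
    have "X.w j = s' (X.W.coord (X.w j) j) (X.w j)"
      using j by (simp add: X.W.coord_basis_vec)
    also have "\<dots> = s' (Y.W.coord (X.w j) j) (Y.w j)"
      by (rule diag)
    finally have "X.w j = s' (Y.W.coord (X.w j) j) (Y.w j)" .
    then show ?thesis
      using X.W.basis_nonzero[OF j] by (metis X.V'.scale_zero_left)
  qed
  then show ?thesis
    by (intro exI[of _ "\<lambda>j. Y.W.coord (X.w j) j"]) blast
qed

text \<open>Rescaling the vectors \<open>w\<^sub>j\<close> does not move them in the flag, and the level of \<open>w\<^sub>j\<close>
  determines the image under \<open>g\<close> of the class of \<open>j\<close>.\<close>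

lemma Aut0_eq_if_wvec_rescaled:
  assumes c: "\<forall>j\<in>idx n. c j \<noteq> 0 \<and> X.w j = s' (c j) (Y.w j)"
  shows "g = h"
proof -
  have "g \<alpha> = h \<alpha>" if \<alpha>: "\<alpha> \<in> Cls n \<rho>" for \<alpha>
  proof -
    obtain j where j: "j \<in> idx n" and \<alpha>j: "\<alpha> = cls n \<rho> j"
      using \<alpha> by (elim X.ClsE)
    have X_w: "X.w j = s' (c j) (Y.w j)"
      using c j by blast
    have Y_w: "Y.w j = s' (inverse (c j)) (X.w j)"
      using c j by simp
    have level: "cle \<rho> (g \<alpha>) \<beta> \<longleftrightarrow> cle \<rho> (h \<alpha>) \<beta>" if \<beta>: "\<beta> \<in> Cls n \<rho>" for \<beta>
    proof -
      have "X.V'.subspace (Vf' \<beta>)"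
        using X.flag' \<beta> by (simp add: adapted_flag_def X.V'.subspace_span)
      then have "X.w j \<in> Vf' \<beta> \<longleftrightarrow> Y.w j \<in> Vf' \<beta>"
        using X_w Y_w X.V'.subspace_scale by metis
      then show ?thesis
        using X.wvec_in_Vf'_iff[OF \<beta> j] Y.wvec_in_Vf'_iff[OF \<beta> j] \<alpha>j by simp
    qed
    have g\<alpha>: "g \<alpha> \<in> Cls n \<rho>" and h\<alpha>: "h \<alpha> \<in> Cls n \<rho>"
      using \<alpha> X.Aut0_Cls X.g_Aut0 Y.g_Aut0 by auto
    then show ?thesis
      using level[OF g\<alpha>] level[OF h\<alpha>] X.cle_refl X.cle_antisym by metis
  qed
  then show "g = h"
    using X.g_Aut0 Y.g_Aut0 by (auto simp: Aut0_def intro: extensionalityI)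
qed

lemma approx_rel_if_Fmap_eq:
  assumes eq: "X.Phi = Y.Phi"
  shows "((A, g, a), (B, h, b)) \<in> approx_rel n \<rho>"
proof -
  obtain c where c: "\<forall>j\<in>idx n. c j \<noteq> 0 \<and> X.w j = s' (c j) (Y.w j)"
    using wvec_rescaled_if_Fmap_eq[OF eq] by blast
  have gh: "g = h"
    using Aut0_eq_if_wvec_rescaled[OF c] .
  define d where "d j = inverse (c j)" for j
  have d: "\<forall>i\<in>idx n. d i \<noteq> 0"
    using c by (simp add: d_def)
  have Y_w: "Y.w j = s' (d j) (X.w j)" if "j \<in> idx n" for j
    using c that by (simp add: d_def)
  have Y_coord_X_w: "Y.W.coord (X.w j) j = c j" if "j \<in> idx n" for j
    using c that by (simp add: Y.W.coord_scale Y.W.coord_basis_vec)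
  have "a i j * inverse (b i j) = d i * inverse (d j)" if ij: "i \<in> idx n" "j \<in> idx n" "\<rho> i j" for i j
  proof -
    have "s' (a i j) (X.w i) = s' (b i j * c j) (Y.w i)"
      using Fmap_Eop_eq_if_Fmap_eq[OF eq ij, of "X.w j"] ij by (simp add: X.W.coord_basis_vec Y_coord_X_w)
    also have "\<dots> = s' (b i j * c j * d i) (X.w i)"
      using ij by (simp add: Y_w)
    finally have "a i j = b i j * c j * d i"
      using X.W.basis_nonzero[OF ij(1)] by simp
    then show ?thesis
      using Y.a_nonzero[OF ij] c ij by (simp add: d_def field_simps)
  qed
  moreover have "matg n \<rho> B g i j = matg n \<rho> A g i j * d j" if ij: "i \<in> idx n" "j \<in> idx n" for i j
  proof -
    have "matg n \<rho> B g i j = X.V'.coord (Y.w j) i"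
      using Y.coord_v'_wvec[OF ij] gh by simp
    also have "\<dots> = d j * X.V'.coord (X.w j) i"
      using Y_w[OF ij(2)] by (simp add: X.V'.coord_scale)
    also have "\<dots> = matg n \<rho> A g i j * d j"
      using X.coord_v'_wvec[OF ij] by (simp add: mult.commute)
    finally show ?thesis .
  qed
  ultimately show ?thesis
    unfolding approx_rel_def using X.triple Y.triple gh d by blast
qed

lemma Fmap_eq_if_approx_rel:
  assumes "((A, g, a), (B, h, b)) \<in> approx_rel n \<rho>"
  shows "X.Phi = Y.Phi"
proof -
  obtain d where gh: "g = h" and d: "\<forall>i\<in>idx n. d i \<noteq> 0"
    and ab: "\<forall>i\<in>idx n. \<forall>j\<in>idx n. \<rho> i j \<longrightarrow> a i j * inverse (b i j) = d i * inverse (d j)"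
    and BA: "\<forall>i\<in>idx n. \<forall>j\<in>idx n. matg n \<rho> B g i j = matg n \<rho> A g i j * d j"
    using assms unfolding approx_rel_def by blast
  have Y_w: "Y.w j = s' (d j) (X.w j)" if j: "j \<in> idx n" for j
  proof (rule X.V'.coord_eqI)
    fix i assume "i \<in> idx n"
    then show "X.V'.coord (Y.w j) i = X.V'.coord (s' (d j) (X.w j)) i"
      using Y.coord_v'_wvec X.coord_v'_wvec BA j gh by (simp add: X.V'.coord_scale mult.commute)
  qed
  have X_coord: "X.W.coord z j = d j * Y.W.coord z j" if j: "j \<in> idx n" for z j
  proof -
    have "z = (\<Sum>j\<in>idx n. s' (X.W.coord z j) (X.w j))"
      by (simp add: X.W.coord_expansion)
    also have "\<dots> = (\<Sum>j\<in>idx n. s' (X.W.coord z j * inverse (d j)) (Y.w j))"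
      using d Y_w by (intro sum.cong refl) simp
    finally have "Y.W.coord z j = Y.W.coord (\<Sum>j\<in>idx n. s' (X.W.coord z j * inverse (d j)) (Y.w j)) j"
      by simp
    then show ?thesis
      using Y.W.coord_lincomb[OF j] d j by simp
  qed
  have "Fij s' n \<rho> v' B h b i j z = Fij s' n \<rho> v' A g a i j z"
    if ij: "i \<in> idx n" "j \<in> idx n" "\<rho> i j" for i j z
  proof -
    have "a i j * inverse (b i j) = d i * inverse (d j)"
      using ab ij by blast
    then have "d i * b i j = d j * a i j"
      using X.a_nonzero[OF ij] Y.a_nonzero[OF ij] d ij by (auto simp: field_simps)
    then have "Y.W.coord z j * b i j * d i = X.W.coord z j * a i j"
      unfolding X_coord[OF ij(2)] by (metis mult.commute mult.left_commute)
    then show ?thesis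
      unfolding X.Fij_eq Y.Fij_eq using Y_w[OF ij(1)] by simp
  qed
  then show "X.Phi = Y.Phi"
    unfolding Fmap_def by (auto intro!: ext sum.cong simp: gh)
qed

end

lemma (in flag_pair) Fmap_eq_iff_approx_rel:
  assumes "x \<in> Triples n \<rho>" "y \<in> Triples n \<rho>"
  shows "Fmap s s' n \<rho> Vf v v' x = Fmap s s' n \<rho> Vf v v' y \<longleftrightarrow> (x, y) \<in> approx_rel n \<rho>"
proof -
  obtain A g a B h b where xy: "x = (A, g, a)" "y = (B, h, b)"
    by (cases x, cases y) auto
  interpret flag_triple_pair n \<rho> s s' Vf Vf' v v' A g a B h b
    using assms xy by unfold_locales auto
  show ?thesis
    using approx_rel_if_Fmap_eq Fmap_eq_if_approx_rel xy by blast
qed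

section \<open>Every isomorphism comes from a triple\<close>

lemma (in flag_pair) EndV'_coord_support:
  assumes G: "G \<in> EndV'" and t: "t \<in> idx n" and z: "\<forall>q\<in>idx n. V'.coord z q \<noteq> 0 \<longrightarrow> \<rho> q t"
    and p: "p \<in> idx n" and nz: "V'.coord (G z) p \<noteq> 0"
  shows "\<rho> p t"
proof -
  have "Vector_Spaces.linear s' s' G"
    using G EndV'_iff by blast
  then have "V'.coord (G z) p = (\<Sum>q\<in>idx n. V'.coord z q * V'.mat_of G p q)"
    using V'.coord_apply p by blast
  then obtain q where q: "q \<in> idx n" "V'.coord z q * V'.mat_of G p q \<noteq> 0"
    using nz by (metis (no_types, lifting) sum.neutral)
  then have "\<rho> q t" "\<rho> p q"
    using z G EndV'_iff p by auto
  then show ?thesis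
    using rho_trans p q t by blast
qed

locale flag_iso = flag_pair +
  fixes \<phi> assumes \<phi>: "\<phi> \<in> Iso_alg s s' (EndF s n \<rho> Vf) (EndF s' n \<rho> Vf')"
begin

abbreviation F where "F i j \<equiv> \<phi> (Eop i j)"

lemma F_EndV': "i \<in> idx n \<Longrightarrow> j \<in> idx n \<Longrightarrow> \<rho> i j \<Longrightarrow> F i j \<in> EndV'"
  using iso_EndV'[OF \<phi>] Eop_EndV by blast

lemma F_linear: "i \<in> idx n \<Longrightarrow> j \<in> idx n \<Longrightarrow> \<rho> i j \<Longrightarrow> Vector_Spaces.linear s' s' (F i j)"
  using F_EndV' EndV'_iff by blast

lemma F_diag_linear: "j \<in> idx n \<Longrightarrow> Vector_Spaces.linear s' s' (F j j)"
  using F_linear rho_refl by blast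

lemma F_comp:
  assumes "i \<in> idx n" "j \<in> idx n" "\<rho> i j" "k \<in> idx n" "l \<in> idx n" "\<rho> k l"
  shows "F i j (F k l y) = (if j = k then F i l y else 0)"
proof -
  have "F i j \<circ> F k l = \<phi> (Eop i j \<circ> Eop k l)"
    using iso_comp[OF \<phi>] Eop_EndV assms by metis
  also have "\<dots> = (if j = k then F i l else (\<lambda>x. 0))"
    using Eop_comp[of j i k l] assms iso_zero[OF \<phi>] by auto
  finally show ?thesis
    by (auto simp: fun_eq_iff split: if_splits)
qed

lemma F_idem: "j \<in> idx n \<Longrightarrow> F j j (F j j y) = F j j y"
  using F_comp[of j j j j] rho_refl by auto

lemma sum_F_diag: "(\<Sum>j\<in>idx n. F j j y) = y"
proof -
  have "\<phi> (\<lambda>x. \<Sum>j\<in>idx n. Eop j j x) = (\<lambda>y. \<Sum>j\<in>idx n. F j j y)"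
    using conjunct2[OF iso_sum[OF \<phi>, of "idx n" "\<lambda>j. Eop j j"]] Eop_EndV rho_refl by auto
  then show ?thesis
    using sum_Eop_diag iso_id[OF \<phi>] by (metis id_apply)
qed

lemma F_nonzero:
  assumes "i \<in> idx n" "j \<in> idx n" "\<rho> i j"
  shows "F i j \<noteq> (\<lambda>x. 0)"
proof
  assume "F i j = (\<lambda>x. 0)"
  then have "\<phi> (Eop i j) = \<phi> (\<lambda>x. 0)"
    using iso_zero[OF \<phi>] by simp
  then have "Eop i j = (\<lambda>x. 0)"
    using iso_bij[OF \<phi>] Eop_EndV[OF assms] EndV_zero by (metis bij_betw_def inj_onD)
  then show False
    using Eop_nonzero assms by blast
qed

text \<open>Because \<open>E\<^sub>i\<^sub>i H E\<^sub>j\<^sub>j = H\<^sub>i\<^sub>j E\<^sub>i\<^sub>j\<close> for every \<open>H\<close>, and \<open>H\<^sub>i\<^sub>j = 0\<close> unless \<open>i \<rho> j\<close>.\<close>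

lemma F_sandwich:
  assumes G: "G \<in> EndV'" and i: "i \<in> idx n" and j: "j \<in> idx n"
  shows "\<exists>c. \<forall>y. F i i (G (F j j y)) = (if \<rho> i j then s' c (F i j y) else 0)"
proof -
  let ?H = "inv_into EndV \<phi> G"
  have H: "?H \<in> EndV"
    using G iso_bij[OF \<phi>] by (metis bij_betw_def inv_into_into)
  have \<phi>H: "\<phi> ?H = G"
    using G iso_bij[OF \<phi>] bij_betw_inv_into_right by metis
  have "F i i \<circ> (G \<circ> F j j) = \<phi> (Eop i i \<circ> (?H \<circ> Eop j j))"
    using iso_comp[OF \<phi>] Eop_EndV EndV_comp H i j rho_refl \<phi>H by metis
  also have "\<dots> = \<phi> (\<lambda>x. s (V.mat_of ?H i j) (Eop i j x))"
    using Eop_sandwich[OF H i j] by simp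
  finally have sandwich: "F i i \<circ> (G \<circ> F j j) = \<phi> (\<lambda>x. s (V.mat_of ?H i j) (Eop i j x))" .
  show ?thesis
  proof (cases "\<rho> i j")
    case True
    then have "F i i \<circ> (G \<circ> F j j) = (\<lambda>y. s' (V.mat_of ?H i j) (F i j y))"
      using sandwich iso_scale[OF \<phi> Eop_EndV[OF i j True]] by simp
    then show ?thesis
      using True by (auto simp: fun_eq_iff)
  next
    case False
    then have "V.mat_of ?H i j = 0"
      using H EndV_iff i j by blast
    then have "F i i \<circ> (G \<circ> F j j) = (\<lambda>y. 0)"
      using sandwich iso_zero[OF \<phi>] by simp
    then show ?thesis
      using False by (auto simp: fun_eq_iff)
  qed
qed

text \<open>Sandwich the rank-one map \<open>y \<mapsto> y\<^sub>r x\<close> between two copies of \<open>F\<^sub>j\<^sub>j\<close>.\<close>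

lemma F_diag_range_line:
  assumes j: "j \<in> idx n" and fixed: "F j j x = x" and x: "x \<noteq> 0"
    and t: "t \<in> idx n" and below: "\<forall>q\<in>idx n. V'.coord x q \<noteq> 0 \<longrightarrow> \<rho> q t"
    and r: "r \<in> idx n" "\<rho> t r" "V'.coord x r \<noteq> 0"
  shows "\<exists>c. F j j y = s' c x"
proof -
  define G where "G = (\<lambda>y. s' (V'.coord y r) x)"
  have "G \<in> EndV'"
  proof -
    have "Vector_Spaces.linear s' s' G"
      by (simp add: G_def Vector_Spaces.linear_iff vs' V'.coord_add V'.coord_scale V'.scale_left_distrib)
    moreover have "\<rho> p q" if "p \<in> idx n" "q \<in> idx n" "V'.mat_of G p q \<noteq> 0" for p q
    proof -
      have "V'.coord (v' q) r \<noteq> 0" "V'.coord x p \<noteq> 0"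
        using that by (auto simp: V'.mat_of_entry G_def V'.coord_scale)
      then have "q = r" "\<rho> p t"
        using that below r by (auto simp: V'.coord_basis_vec split: if_splits)
      then show ?thesis
        using rho_trans that r t by blast
    qed
    ultimately show ?thesis
      using EndV'_iff by blast
  qed
  then obtain c where sandwich: "\<forall>y. F j j (G (F j j y)) = s' c (F j j y)"
    using F_sandwich j rho_refl by fastforce
  have G_F: "F j j (G y) = s' (V'.coord y r) x" for y
    using fixed by (simp add: G_def linear_apply(1)[OF F_diag_linear[OF j]])
  have line: "s' c (F j j y) = s' (V'.coord (F j j y) r) x" for y
    using sandwich[rule_format, of y] G_F[of "F j j y"] by simp
  then have "s' c x = s' (V'.coord x r) x"
    using fixed by metis
  then have "c = V'.coord x r"
    using x by simp
  then have "F j j y = s' (inverse c * V'.coord (F j j y) r) x"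
    using line[of y] r(3) by (metis V'.scale_scale inverse_nonzero_iff_nonzero V'.scale_one left_inverse)
  then show ?thesis
    by blast
qed

definition diag_witness where
  "diag_witness j x t \<longleftrightarrow> t \<in> idx n \<and> F j j x = x \<and> (\<forall>y. \<exists>c. F j j y = s' c x) \<and>
     (\<forall>q\<in>idx n. V'.coord x q \<noteq> 0 \<longrightarrow> \<rho> q t) \<and> (\<exists>r\<in>idx n. \<rho> t r \<and> V'.coord x r \<noteq> 0)"

text \<open>Take \<open>t\<close> with \<open>F\<^sub>j\<^sub>j(v'\<^sub>t) \<noteq> 0\<close> and as few indices below it as possible; then \<open>F\<^sub>j\<^sub>j(v'\<^sub>t)\<close>
  is a witness.\<close>

lemma diag_witness_exists:
  assumes j: "j \<in> idx n"
  shows "\<exists>x t. diag_witness j x t"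
proof -
  let ?f = "F j j"
  have lf: "Vector_Spaces.linear s' s' ?f"
    using F_diag_linear[OF j] .
  have f_expansion: "?f y = (\<Sum>q\<in>idx n. s' (V'.coord y q) (?f (v' q)))" for y
    by (subst V'.coord_expansion[of y, symmetric]) (simp add: linear_apply(3)[OF lf])
  have "\<exists>t\<in>idx n. ?f (v' t) \<noteq> 0"
  proof (rule ccontr)
    assume "\<not> ?thesis"
    then have "?f y = 0" for y
      using f_expansion[of y] by simp
    then show False
      using F_nonzero[OF j j rho_refl[OF j]] by auto
  qed
  then obtain t where t: "t \<in> idx n \<and> ?f (v' t) \<noteq> 0"
    and t_min: "\<forall>q. q \<in> idx n \<and> ?f (v' q) \<noteq> 0 \<longrightarrow> card {p\<in>idx n. \<rho> p t} \<le> card {p\<in>idx n. \<rho> p q}"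
    using ex_has_least_nat[of "\<lambda>t. t \<in> idx n \<and> ?f (v' t) \<noteq> 0" _ "\<lambda>t. card {p\<in>idx n. \<rho> p t}"]
    by blast
  have above: "\<rho> t q" if q: "q \<in> idx n" "\<rho> q t" "?f (v' q) \<noteq> 0" for q
  proof (rule ccontr)
    assume "\<not> \<rho> t q"
    then have "{p\<in>idx n. \<rho> p q} \<subset> {p\<in>idx n. \<rho> p t}"
      using q t rho_refl rho_trans by blast
    then have "card {p\<in>idx n. \<rho> p q} < card {p\<in>idx n. \<rho> p t}"
      by (intro psubset_card_mono) auto
    then show False
      using t_min q by (meson not_le)
  qed
  define x where "x = ?f (v' t)"
  have x: "x \<noteq> 0" "?f x = x"
    using t F_idem j by (simp_all add: x_def)
  have "?f \<in> EndV'"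
    using F_EndV' j rho_refl by blast
  then have below: "\<forall>q\<in>idx n. V'.coord x q \<noteq> 0 \<longrightarrow> \<rho> q t"
    using EndV'_iff t by (auto simp: x_def V'.mat_of_entry)
  have "\<exists>r\<in>idx n. \<rho> t r \<and> V'.coord x r \<noteq> 0"
  proof (rule ccontr)
    assume "\<not> ?thesis"
    then have "?f (v' q) = 0" if "q \<in> idx n" "V'.coord x q \<noteq> 0" for q
      using below above that by blast
    then have zero: "s' (V'.coord x q) (?f (v' q)) = 0" if "q \<in> idx n" for q
      using that by (cases "V'.coord x q = 0") auto
    have "?f x = (\<Sum>q\<in>idx n. s' (V'.coord x q) (?f (v' q)))"
      by (rule f_expansion)
    also have "\<dots> = 0"
      using zero by (intro sum.neutral) blast
    finally have "?f x = 0" .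
    then show False
      using x by simp
  qed
  then have "diag_witness j x t"
    using F_diag_range_line[OF j x(2) x(1)] t x below by (auto simp: diag_witness_def)
  then show ?thesis
    by blast
qed

definition diag_choice where
  "diag_choice j = (SOME p. diag_witness j (fst p) (snd p))"

definition w where "w j = fst (diag_choice j)"

definition pos where "pos j = snd (diag_choice j)"

lemma diag_witness_w: "j \<in> idx n \<Longrightarrow> diag_witness j (w j) (pos j)"
  using diag_witness_exists[of j] someI_ex[of "\<lambda>p. diag_witness j (fst p) (snd p)"]
  by (auto simp: w_def pos_def diag_choice_def)

lemma pos_idx: "j \<in> idx n \<Longrightarrow> pos j \<in> idx n"
  and F_diag_w_self: "j \<in> idx n \<Longrightarrow> F j j (w j) = w j"
  and F_diag_range: "j \<in> idx n \<Longrightarrow> \<exists>c. F j j y = s' c (w j)"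
  and coord_w_below: "j \<in> idx n \<Longrightarrow> q \<in> idx n \<Longrightarrow> V'.coord (w j) q \<noteq> 0 \<Longrightarrow> \<rho> q (pos j)"
  and coord_w_above: "j \<in> idx n \<Longrightarrow> \<exists>r\<in>idx n. \<rho> (pos j) r \<and> V'.coord (w j) r \<noteq> 0"
  using diag_witness_w by (auto simp: diag_witness_def)

lemma w_nonzero: "j \<in> idx n \<Longrightarrow> w j \<noteq> 0"
  using coord_w_above by fastforce

lemma F_diag_w: "j \<in> idx n \<Longrightarrow> r \<in> idx n \<Longrightarrow> F j j (w r) = (if j = r then w r else 0)"
  using F_comp[of j j r r "w r"] F_diag_w_self rho_refl by metis

lemma basis_w: "is_basis_fam s' n w"
proof -
  have inj: "inj_on w (idx n)"
    using F_diag_w F_diag_w_self w_nonzero by (metis inj_onI)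
  have "y \<in> V'.span (w ` idx n)" for y
  proof -
    have "F j j y \<in> V'.span (w ` idx n)" if j: "j \<in> idx n" for j
      using F_diag_range[OF j, of y] j by (metis V'.span_base V'.span_scale image_eqI)
    then have "(\<Sum>j\<in>idx n. F j j y) \<in> V'.span (w ` idx n)"
      by (intro V'.span_sum) auto
    then show ?thesis
      using sum_F_diag by simp
  qed
  then have spanning: "V'.span (w ` idx n) = UNIV"
    by auto
  have "\<not> V'.dependent (w ` idx n)"
  proof
    assume "V'.dependent (w ` idx n)"
    then obtain c where c1: "\<exists>b\<in>w ` idx n. c b \<noteq> 0" and c2: "(\<Sum>b\<in>w ` idx n. s' (c b) b) = 0"
      using V'.dependent_finite[of "w ` idx n"] by auto
    have lincomb: "(\<Sum>j\<in>idx n. s' (c (w j)) (w j)) = 0"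
      using c2 inj by (simp add: sum.reindex)
    have "c (w k) = 0" if k: "k \<in> idx n" for k
    proof -
      have "0 = F k k (\<Sum>j\<in>idx n. s' (c (w j)) (w j))"
        using lincomb linear_apply(2)[OF F_diag_linear[OF k]] by simp
      also have "\<dots> = s' (c (w k)) (w k)"
        using k by (simp add: linear_apply(3)[OF F_diag_linear[OF k]] F_diag_w if_distrib[of "s' _"] cong: if_cong)
      finally show ?thesis
        using w_nonzero[OF k] by simp
    qed
    then show False
      using c1 by auto
  qed
  with inj spanning show ?thesis
    by (simp add: is_basis_fam_def)
qed

sublocale W: coord_basis s' n w
  using vs' basis_w by (simp add: coord_basis_def coord_basis_axioms_def)

definition a_iso where
  "a_iso i j = (if i \<in> idx n \<and> j \<in> idx n \<and> \<rho> i j then W.coord (F i j (w j)) i else 0)"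

lemma F_apply:
  assumes i: "i \<in> idx n" and j: "j \<in> idx n" and ij: "\<rho> i j"
  shows "F i j y = s' (a_iso i j * W.coord y j) (w i)"
proof -
  have lF: "Vector_Spaces.linear s' s' (F i j)"
    using F_linear i j ij by blast
  define c where "c = W.coord (F i j (w j)) i"
  have "F i j (w j) = F i i (F i j (w j))"
    using F_comp[OF i i rho_refl[OF i] i j ij] by simp
  also have "\<dots> = (\<Sum>q\<in>idx n. s' (W.coord (F i j (w j)) q) (F i i (w q)))"
    by (subst W.coord_expansion[symmetric]) (simp add: linear_apply(3)[OF F_diag_linear[OF i]])
  also have "\<dots> = s' c (w i)"
    using i by (simp add: c_def F_diag_w if_distrib[of "s' _"] cong: if_cong)
  finally have Fw_j: "F i j (w j) = s' c (w i)" .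
  have Fw: "F i j (w r) = (if r = j then s' c (w i) else 0)" if r: "r \<in> idx n" for r
    using F_comp[OF i j ij r r rho_refl[OF r], of "w r"] F_diag_w_self[OF r] Fw_j by auto
  have "F i j y = (\<Sum>r\<in>idx n. s' (W.coord y r) (F i j (w r)))"
    by (subst W.coord_expansion[of y, symmetric]) (simp add: linear_apply(3)[OF lF])
  also have "\<dots> = s' (c * W.coord y j) (w i)"
    using j by (simp add: Fw if_distrib[of "s' _"] mult.commute cong: if_cong)
  finally show ?thesis
    using i j ij by (simp add: a_iso_def c_def)
qed

lemma a_iso_nonzero:
  assumes "i \<in> idx n" "j \<in> idx n" "\<rho> i j"
  shows "a_iso i j \<noteq> 0"
proof
  assume "a_iso i j = 0"
  then have "F i j = (\<lambda>x. 0)"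
    using F_apply[OF assms] by auto
  then show False
    using F_nonzero assms by blast
qed

lemma a_iso_Tfam: "a_iso \<in> Tfam n \<rho>"
proof -
  have "a_iso i j * a_iso j r = a_iso i r"
    if ijr: "i \<in> idx n" "j \<in> idx n" "r \<in> idx n" "\<rho> i j" "\<rho> j r" for i j r
  proof -
    have ir: "\<rho> i r"
      using rho_trans ijr by blast
    have "F i j (F j r (w r)) = F i r (w r)"
      using F_comp ijr ir by simp
    then have "s' (a_iso i j * a_iso j r) (w i) = s' (a_iso i r) (w i)"
      using ijr ir by (simp add: F_apply W.coord_scale W.coord_basis_vec mult.commute mult.left_commute)
    then show ?thesis
      using w_nonzero ijr by simp
  qed
  then show ?thesis
    using a_iso_nonzero by (auto simp: Tfam_def a_iso_def)
qed

lemma F_diag_apply: "j \<in> idx n \<Longrightarrow> F j j y = s' (W.coord y j) (w j)"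
  using F_apply[of j j y] rho_refl Tfam_diag[OF a_iso_Tfam] by simp

lemma coord_v'_in_w_support:
  assumes q: "q \<in> idx n" and j: "j \<in> idx n" and nz: "W.coord (v' q) j \<noteq> 0"
  shows "\<rho> (pos j) q"
proof -
  obtain r where r: "r \<in> idx n" "\<rho> (pos j) r" "V'.coord (w j) r \<noteq> 0"
    using coord_w_above[OF j] by blast
  have "V'.coord (F j j (v' q)) r \<noteq> 0"
    using F_diag_apply[OF j] nz r by (simp add: V'.coord_scale)
  moreover have "\<forall>p\<in>idx n. V'.coord (v' q) p \<noteq> 0 \<longrightarrow> \<rho> p q"
    using q by (auto simp: V'.coord_basis_vec rho_refl)
  ultimately have "\<rho> r q"
    using EndV'_coord_support[OF F_EndV'[OF j j rho_refl[OF j]] q _ r(1)] by blast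
  then show ?thesis
    using rho_trans r pos_idx j q by blast
qed

end

context flag_iso
begin

lemma rho_pos_if_rho:
  assumes i: "i \<in> idx n" and j: "j \<in> idx n" and ij: "\<rho> i j"
  shows "\<rho> (pos i) (pos j)"
proof -
  obtain r where r: "r \<in> idx n" "\<rho> (pos i) r" "V'.coord (w i) r \<noteq> 0"
    using coord_w_above[OF i] by blast
  have "V'.coord (F i j (w j)) r \<noteq> 0"
    using F_apply[OF i j ij] a_iso_nonzero[OF i j ij] r j by (simp add: V'.coord_scale W.coord_basis_vec)
  then have "\<rho> r (pos j)"
    using EndV'_coord_support[OF F_EndV'[OF i j ij] pos_idx[OF j] _ r(1)] coord_w_below j by blast
  then show ?thesis
    using rho_trans r pos_idx i j by blast
qed

text \<open>Sandwich the map \<open>y \<mapsto> y\<^sub>j w\<^sub>i\<close> (in \<open>w\<close>-coordinates), which preserves \<open>\<F>'\<close> when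
  \<open>pos i \<rho> pos j\<close>, between \<open>F\<^sub>i\<^sub>i\<close> and \<open>F\<^sub>j\<^sub>j\<close>.\<close>

lemma rho_if_rho_pos:
  assumes i: "i \<in> idx n" and j: "j \<in> idx n" and pos_ij: "\<rho> (pos i) (pos j)"
  shows "\<rho> i j"
proof -
  define G where "G = (\<lambda>y. s' (W.coord y j) (w i))"
  have "G \<in> EndV'"
  proof -
    have "Vector_Spaces.linear s' s' G"
      by (simp add: G_def Vector_Spaces.linear_iff vs' W.coord_add W.coord_scale V'.scale_left_distrib)
    moreover have "\<rho> p q" if pq: "p \<in> idx n" "q \<in> idx n" "V'.mat_of G p q \<noteq> 0" for p q
    proof -
      have "W.coord (v' q) j \<noteq> 0" "V'.coord (w i) p \<noteq> 0"
        using pq by (auto simp: V'.mat_of_entry G_def V'.coord_scale)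
      then have "\<rho> (pos j) q" "\<rho> p (pos i)"
        using coord_v'_in_w_support pq j coord_w_below i by auto
      then show ?thesis
        using rho_trans pq pos_ij pos_idx i j by meson
    qed
    ultimately show ?thesis
      using EndV'_iff by blast
  qed
  then obtain c where c: "\<forall>y. F i i (G (F j j y)) = (if \<rho> i j then s' c (F i j y) else 0)"
    using F_sandwich i j by blast
  have "F i i (G (F j j y)) = G y" for y
    using j F_diag_w_self[OF i]
    by (simp add: F_diag_apply[OF j] G_def W.coord_scale W.coord_basis_vec linear_apply(1)[OF F_diag_linear[OF i]])
  then have "G (w j) = (if \<rho> i j then s' c (F i j (w j)) else 0)"
    using c by metis
  moreover have "G (w j) = w i"
    using j by (simp add: G_def W.coord_basis_vec)
  ultimately show "\<rho> i j"
    using w_nonzero[OF i] by (auto split: if_splits)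
qed

lemma rho_pos_iff: "i \<in> idx n \<Longrightarrow> j \<in> idx n \<Longrightarrow> \<rho> (pos i) (pos j) \<longleftrightarrow> \<rho> i j"
  using rho_pos_if_rho rho_if_rho_pos by blast

lemma span_down_closed_eq:
  assumes down: "\<And>q r. q \<in> idx n \<Longrightarrow> r \<in> idx n \<Longrightarrow> P q \<Longrightarrow> \<rho> r q \<Longrightarrow> P r"
  shows "V'.span (v' ` {r\<in>idx n. P r}) = V'.span (w ` {j\<in>idx n. P (pos j)})"
proof (subst V'.span_eq, intro conjI subsetI)
  fix x assume "x \<in> v' ` {r\<in>idx n. P r}"
  then obtain r where r: "r \<in> idx n" "P r" "x = v' r"
    by blast
  have "W.coord (v' r) j = 0" if j: "j \<in> idx n" "\<not> P (pos j)" for j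
  proof (rule ccontr)
    assume "W.coord (v' r) j \<noteq> 0"
    then have "\<rho> (pos j) r"
      using coord_v'_in_w_support r(1) j(1) by blast
    then show False
      using down[OF r(1) pos_idx[OF j(1)] r(2)] j(2) by blast
  qed
  then show "x \<in> V'.span (w ` {j\<in>idx n. P (pos j)})"
    using W.in_span_basis_iff[of "{j\<in>idx n. P (pos j)}"] r by auto
next
  fix x assume "x \<in> w ` {j\<in>idx n. P (pos j)}"
  then obtain j where j: "j \<in> idx n" "P (pos j)" "x = w j"
    by blast
  have "V'.coord (w j) q = 0" if q: "q \<in> idx n" "\<not> P q" for q
  proof (rule ccontr)
    assume "V'.coord (w j) q \<noteq> 0"
    then have "\<rho> q (pos j)"
      using coord_w_below j(1) q(1) by blast
    then show False
      using down[OF pos_idx[OF j(1)] q(1) j(2)] q(2) by blast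
  qed
  then show "x \<in> V'.span (v' ` {r\<in>idx n. P r})"
    using V'.in_span_basis_iff[of "{r\<in>idx n. P r}"] j by auto
qed

lemma card_eq_if_span_eq:
  assumes S: "S \<subseteq> idx n" and T: "T \<subseteq> idx n" and span: "V'.span (v' ` S) = V'.span (w ` T)"
  shows "card S = card T"
proof -
  have "V'.independent (v' ` S)"
    using V'.independent_mono[OF V'.independent_basis] S by blast
  have "V'.independent (w ` T)"
    using V'.independent_mono[OF W.independent_basis] T by blast
  have "card (v' ` S) = V'.dim (v' ` S)"
    using V'.dim_eq_card_independent[OF \<open>V'.independent (v' ` S)\<close>] by simp
  also have "\<dots> = card (w ` T)"
    using V'.dim_eq_card[OF span[symmetric] \<open>V'.independent (w ` T)\<close>] .
  finally show ?thesis
    using card_image[OF inj_on_subset[OF V'.inj_on_basis S]] card_image[OF inj_on_subset[OF W.inj_on_basis T]]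
    by simp
qed

text \<open>The class of \<open>b\<close> is the difference of two downward closed sets.\<close>

lemma card_pos_class:
  assumes b: "b \<in> idx n"
  shows "card {j\<in>idx n. \<rho> (pos j) b \<and> \<rho> b (pos j)} = card (cls n \<rho> b)"
proof -
  let ?D = "{r\<in>idx n. \<rho> r b}" and ?Ds = "{r\<in>idx n. \<rho> r b \<and> \<not> \<rho> b r}"
  let ?J = "{j\<in>idx n. \<rho> (pos j) b}" and ?Js = "{j\<in>idx n. \<rho> (pos j) b \<and> \<not> \<rho> b (pos j)}"
  have down: "\<rho> r b" if "q \<in> idx n" "r \<in> idx n" "\<rho> q b" "\<rho> r q" for q r
    using rho_trans[of r q b] that b by blast
  have strict_down: "\<rho> r b \<and> \<not> \<rho> b r"
    if "q \<in> idx n" "r \<in> idx n" "\<rho> q b \<and> \<not> \<rho> b q" "\<rho> r q" for q r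
    using rho_trans[of r q b] rho_trans[of b r q] that b by blast
  have "card ?D = card ?J"
    by (rule card_eq_if_span_eq[OF _ _ span_down_closed_eq[of "\<lambda>r. \<rho> r b", OF down]]) auto
  moreover have "card ?Ds = card ?Js"
    by (rule card_eq_if_span_eq[OF _ _ span_down_closed_eq[of "\<lambda>r. \<rho> r b \<and> \<not> \<rho> b r", OF strict_down]])
      auto
  moreover have "cls n \<rho> b = ?D - ?Ds" "{j\<in>idx n. \<rho> (pos j) b \<and> \<rho> b (pos j)} = ?J - ?Js"
    by (auto simp: cls_def)
  moreover have "?Ds \<subseteq> ?D" "?Js \<subseteq> ?J"
    by auto
  ultimately show ?thesis
    by (simp add: card_Diff_subset)
qed

definition g_iso where
  "g_iso = restrict (\<lambda>\<alpha>. cls n \<rho> (pos (SOME j. j \<in> idx n \<and> \<alpha> = cls n \<rho> j))) (Cls n \<rho>)"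

lemma cls_pos_eq_iff: "i \<in> idx n \<Longrightarrow> j \<in> idx n \<Longrightarrow> cls n \<rho> (pos i) = cls n \<rho> (pos j) \<longleftrightarrow> cls n \<rho> i = cls n \<rho> j"
  using cls_eq_iff pos_idx rho_pos_iff by simp

lemma g_iso_cls:
  assumes j: "j \<in> idx n"
  shows "g_iso (cls n \<rho> j) = cls n \<rho> (pos j)"
proof -
  let ?j = "SOME j'. j' \<in> idx n \<and> cls n \<rho> j = cls n \<rho> j'"
  have "\<exists>j'. j' \<in> idx n \<and> cls n \<rho> j = cls n \<rho> j'"
    using j by blast
  then have "?j \<in> idx n \<and> cls n \<rho> j = cls n \<rho> ?j"
    by (rule someI_ex)
  then show ?thesis
    using j cls_pos_eq_iff by (simp add: g_iso_def ClsI)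
qed

lemma inj_on_g_iso: "inj_on g_iso (Cls n \<rho>)"
proof (rule inj_onI)
  fix \<alpha> \<beta> assume "\<alpha> \<in> Cls n \<rho>" "\<beta> \<in> Cls n \<rho>" "g_iso \<alpha> = g_iso \<beta>"
  moreover obtain i j where "i \<in> idx n" "\<alpha> = cls n \<rho> i" "j \<in> idx n" "\<beta> = cls n \<rho> j"
    using \<open>\<alpha> \<in> Cls n \<rho>\<close> \<open>\<beta> \<in> Cls n \<rho>\<close> by (elim ClsE)
  ultimately show "\<alpha> = \<beta>"
    using g_iso_cls cls_pos_eq_iff by simp
qed

lemma g_iso_image: "g_iso ` Cls n \<rho> = Cls n \<rho>"
proof
  show "g_iso ` Cls n \<rho> \<subseteq> Cls n \<rho>"
    using g_iso_cls ClsI pos_idx by (auto elim: ClsE)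
  show "Cls n \<rho> \<subseteq> g_iso ` Cls n \<rho>"
  proof
    fix \<beta> assume "\<beta> \<in> Cls n \<rho>"
    then obtain b where b: "b \<in> idx n" "\<beta> = cls n \<rho> b"
      by (elim ClsE)
    have "card (cls n \<rho> b) > 0"
      using cls_self[OF b(1)] by (auto simp: card_gt_0_iff)
    then have "{j\<in>idx n. \<rho> (pos j) b \<and> \<rho> b (pos j)} \<noteq> {}"
      using card_pos_class[OF b(1)] by (metis card.empty less_irrefl)
    then obtain j where j: "j \<in> idx n" "\<rho> (pos j) b" "\<rho> b (pos j)"
      by blast
    then have "g_iso (cls n \<rho> j) = \<beta>"
      using g_iso_cls b cls_eq_iff pos_idx by simp
    then show "\<beta> \<in> g_iso ` Cls n \<rho>"
      using ClsI[OF j(1)] by blast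
  qed
qed

lemma g_iso_Aut0: "g_iso \<in> Aut0 n \<rho>"
proof -
  have "cle \<rho> \<alpha> \<beta> \<longleftrightarrow> cle \<rho> (g_iso \<alpha>) (g_iso \<beta>)" if \<alpha>: "\<alpha> \<in> Cls n \<rho>" and \<beta>: "\<beta> \<in> Cls n \<rho>" for \<alpha> \<beta>
  proof -
    obtain i j where "i \<in> idx n" "\<alpha> = cls n \<rho> i" "j \<in> idx n" "\<beta> = cls n \<rho> j"
      using \<alpha> \<beta> by (elim ClsE)
    then show ?thesis
      using g_iso_cls cle_cls_iff pos_idx rho_pos_iff by simp
  qed
  moreover have "card (g_iso \<alpha>) = card \<alpha>" if \<alpha>: "\<alpha> \<in> Cls n \<rho>" for \<alpha>
  proof -
    obtain j where j: "j \<in> idx n" "\<alpha> = cls n \<rho> j"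
      using \<alpha> by (elim ClsE)
    have "card (g_iso \<alpha>) = card {i\<in>idx n. \<rho> (pos i) (pos j) \<and> \<rho> (pos j) (pos i)}"
      using g_iso_cls card_pos_class pos_idx j by simp
    also have "{i\<in>idx n. \<rho> (pos i) (pos j) \<and> \<rho> (pos j) (pos i)} = cls n \<rho> j"
      using rho_pos_iff j by (auto simp: cls_def)
    finally show ?thesis
      using j by simp
  qed
  moreover have "g_iso \<in> extensional (Cls n \<rho>)"
    by (simp add: g_iso_def)
  ultimately show ?thesis
    using inj_on_g_iso g_iso_image unfolding Aut0_def by (auto simp: bij_betw_def)
qed

abbreviation gt where "gt \<equiv> gtilde n \<rho> g_iso"

definition gt_inv where "gt_inv = inv_into (idx n) gt"

lemma gt_inv_gt: "j \<in> idx n \<Longrightarrow> gt_inv (gt j) = j"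
  using bij_betw_gtilde[OF g_iso_Aut0] by (simp add: gt_inv_def bij_betw_def)

lemma gt_gt_inv: "t \<in> idx n \<Longrightarrow> gt (gt_inv t) = t"
  using bij_betw_gtilde[OF g_iso_Aut0] by (simp add: gt_inv_def bij_betw_inv_into_right)

lemma gt_inv_idx: "t \<in> idx n \<Longrightarrow> gt_inv t \<in> idx n"
  using bij_betw_gtilde[OF g_iso_Aut0] by (metis bij_betwE bij_betw_inv_into gt_inv_def)

lemma gt_equiv_pos:
  assumes j: "j \<in> idx n"
  shows "\<rho> (pos j) (gt j) \<and> \<rho> (gt j) (pos j)"
proof -
  have "cls n \<rho> (pos j) = cls n \<rho> (gt j)"
    using cls_gtilde[OF g_iso_Aut0 j] g_iso_cls[OF j] by simp
  then show ?thesis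
    using cls_eq_iff[OF pos_idx[OF j] gtilde_idx[OF g_iso_Aut0 j]] by simp
qed

text \<open>The matrix of the basis \<open>w\<close> in the basis \<open>v'\<close>, with columns permuted back by \<open>gtilde\<close>.\<close>

definition A_iso where
  "A_iso i t = (if i \<in> idx n \<and> t \<in> idx n then V'.coord (w (gt_inv t)) i else 0)"

definition B_iso where
  "B_iso t i = (if t \<in> idx n \<and> i \<in> idx n then W.coord (v' i) (gt_inv t) else 0)"

lemma A_iso_Mrho: "A_iso \<in> Mrho n \<rho>"
proof -
  have "\<rho> i t" if "i \<in> idx n" "t \<in> idx n" "V'.coord (w (gt_inv t)) i \<noteq> 0" for i t
  proof -
    have "\<rho> i (pos (gt_inv t))"
      using coord_w_below that gt_inv_idx by blast
    moreover have "\<rho> (pos (gt_inv t)) t"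
      using gt_equiv_pos[OF gt_inv_idx[OF that(2)]] gt_gt_inv[OF that(2)] by simp
    ultimately show ?thesis
      using rho_trans that pos_idx gt_inv_idx by blast
  qed
  then show ?thesis
    by (auto simp: Mrho_def A_iso_def split: if_splits)
qed

lemma B_iso_Mrho: "B_iso \<in> Mrho n \<rho>"
proof -
  have "\<rho> t i" if "t \<in> idx n" "i \<in> idx n" "W.coord (v' i) (gt_inv t) \<noteq> 0" for i t
  proof -
    have "\<rho> (pos (gt_inv t)) i"
      using coord_v'_in_w_support that gt_inv_idx by blast
    moreover have "\<rho> t (pos (gt_inv t))"
      using gt_equiv_pos[OF gt_inv_idx[OF that(1)]] gt_gt_inv[OF that(1)] by simp
    ultimately show ?thesis
      using rho_trans that pos_idx gt_inv_idx by blast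
  qed
  then show ?thesis
    by (auto simp: Mrho_def B_iso_def split: if_splits)
qed

lemma A_iso_B_iso: "matmul n A_iso B_iso = matone n"
proof (intro ext)
  fix i r
  show "matmul n A_iso B_iso i r = matone n i r"
  proof (cases "i \<in> idx n \<and> r \<in> idx n")
    case True
    then have i: "i \<in> idx n" and r: "r \<in> idx n"
      by auto
    have "matmul n A_iso B_iso i r = (\<Sum>j\<in>idx n. A_iso i (gt j) * B_iso (gt j) r)"
      unfolding matmul_def using sum.reindex_bij_betw[OF bij_betw_gtilde[OF g_iso_Aut0], of "\<lambda>t. A_iso i t * B_iso t r"]
      by simp
    also have "\<dots> = (\<Sum>j\<in>idx n. W.coord (v' r) j * V'.coord (w j) i)"
      using i r by (intro sum.cong refl) (simp add: A_iso_def B_iso_def gt_inv_gt gtilde_idx[OF g_iso_Aut0])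
    also have "\<dots> = V'.coord (\<Sum>j\<in>idx n. s' (W.coord (v' r) j) (w j)) i"
      by (simp add: V'.coord_sum V'.coord_scale)
    also have "\<dots> = V'.coord (v' r) i"
      by (simp add: W.coord_expansion)
    finally show ?thesis
      using i r by (simp add: V'.coord_basis_vec matone_def)
  next
    case False
    then show ?thesis
      by (auto simp: matmul_def matone_def A_iso_def B_iso_def)
  qed
qed

lemma B_iso_A_iso: "matmul n B_iso A_iso = matone n"
proof (intro ext)
  fix t k
  show "matmul n B_iso A_iso t k = matone n t k"
  proof (cases "t \<in> idx n \<and> k \<in> idx n")
    case True
    then have t: "t \<in> idx n" and k: "k \<in> idx n"
      by auto
    have "matmul n B_iso A_iso t k = (\<Sum>i\<in>idx n. V'.coord (w (gt_inv k)) i * W.coord (v' i) (gt_inv t))"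
      unfolding matmul_def using t k by (intro sum.cong refl) (simp add: A_iso_def B_iso_def)
    also have "\<dots> = W.coord (\<Sum>i\<in>idx n. s' (V'.coord (w (gt_inv k)) i) (v' i)) (gt_inv t)"
      by (simp add: W.coord_sum W.coord_scale)
    also have "\<dots> = W.coord (w (gt_inv k)) (gt_inv t)"
      by (simp add: V'.coord_expansion)
    also have "\<dots> = (if gt_inv t = gt_inv k then 1 else 0)"
      using gt_inv_idx t k by (simp add: W.coord_basis_vec)
    also have "\<dots> = (if t = k then 1 else 0)"
      using gt_gt_inv t k by metis
    finally show ?thesis
      using t by (simp add: matone_def)
  next
    case False
    then show ?thesis
      by (auto simp: matmul_def matone_def A_iso_def B_iso_def)
  qed
qed

lemma triple_iso: "(A_iso, g_iso, a_iso) \<in> Triples n \<rho>"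
proof -
  have "A_iso \<in> Umat n \<rho>"
    unfolding Umat_def using A_iso_Mrho B_iso_Mrho A_iso_B_iso B_iso_A_iso by blast
  then show ?thesis
    using g_iso_Aut0 a_iso_Tfam by (simp add: Triples_def)
qed

lemma wvec_A_iso: "j \<in> idx n \<Longrightarrow> wvec s' n \<rho> v' A_iso g_iso j = w j"
  by (simp add: wvec_def matg_def A_iso_def gt_inv_gt gtilde_idx[OF g_iso_Aut0] V'.coord_expansion cong: sum.cong)

lemma Fmap_triple_iso: "Fmap s s' n \<rho> Vf v v' (A_iso, g_iso, a_iso) = \<phi>"
proof -
  interpret X: flag_triple n \<rho> s s' Vf Vf' v v' A_iso g_iso a_iso
    by unfold_locales (rule triple_iso)
  have "X.w ` idx n = w ` idx n"
    using wvec_A_iso by (auto simp: image_iff)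
  then have X_coord: "X.W.coord z j = W.coord z j" if "j \<in> idx n" for z j
    using that wvec_A_iso by (simp add: X.W.coord_def W.coord_def)
  show ?thesis
  proof (rule Iso_alg_eqI[OF X.Fmap_Iso_alg \<phi>])
    fix i j assume ij: "i \<in> idx n" "j \<in> idx n" "\<rho> i j"
    show "X.Phi (Eop i j) = F i j"
      using X.Fmap_Eop[OF ij] F_apply[OF ij] X_coord[OF ij(2)] wvec_A_iso[OF ij(1)] by (simp add: fun_eq_iff)
  qed
qed

end

lemma (in flag_pair) Fmap_image_Triples:
  "Fmap s s' n \<rho> Vf v v' ` Triples n \<rho> = Iso_alg s s' EndV EndV'"
proof -
  have "Fmap s s' n \<rho> Vf v v' x \<in> Iso_alg s s' EndV EndV'" if x: "x \<in> Triples n \<rho>" for x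
  proof -
    obtain A g a where x_eq: "x = (A, g, a)"
      by (cases x) auto
    interpret flag_triple n \<rho> s s' Vf Vf' v v' A g a
      using x x_eq by unfold_locales simp
    show ?thesis
      using Fmap_Iso_alg x_eq by simp
  qed
  moreover have "\<psi> \<in> Fmap s s' n \<rho> Vf v v' ` Triples n \<rho>" if "\<psi> \<in> Iso_alg s s' EndV EndV'" for \<psi>
  proof -
    interpret flag_iso n \<rho> s s' Vf Vf' v v' \<psi>
      using that by unfold_locales
    show ?thesis
      using Fmap_triple_iso triple_iso by (metis image_eqI)
  qed
  ultimately show ?thesis
    by blast
qed

lemma bij_betw_the_elem_quotient:
  assumes kernel: "\<forall>x\<in>A. \<forall>y\<in>A. f x = f y \<longleftrightarrow> (x, y) \<in> r" and r: "r \<subseteq> A \<times> A"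
  shows "bij_betw (\<lambda>X. the_elem (f ` X)) (A // r) (f ` A)"
proof -
  have eq_class: "r `` {x} = {y\<in>A. f y = f x}" if x: "x \<in> A" for x
  proof (rule set_eqI iffI)+
    fix y assume "y \<in> r `` {x}"
    then have "(x, y) \<in> r" "y \<in> A"
      using r by auto
    then have "f x = f y"
      using kernel x by blast
    then show "y \<in> {y\<in>A. f y = f x}"
      using \<open>y \<in> A\<close> by simp
  next
    fix y assume "y \<in> {y\<in>A. f y = f x}"
    then have "y \<in> A" "f x = f y"
      by auto
    then have "(x, y) \<in> r"
      using kernel x by blast
    then show "y \<in> r `` {x}"
      by simp
  qed
  have the_elem_class: "the_elem (f ` (r `` {x})) = f x" if "x \<in> A" for x
  proof -
    have "f ` (r `` {x}) = {f x}"
      using eq_class[OF that] that by auto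
    then show ?thesis
      by simp
  qed
  have quotient_cases: "\<exists>x\<in>A. X = r `` {x}" if "X \<in> A // r" for X
    using that unfolding quotient_def by blast
  have "inj_on (\<lambda>X. the_elem (f ` X)) (A // r)"
  proof (rule inj_onI)
    fix X Y assume "X \<in> A // r" "Y \<in> A // r" and eq: "the_elem (f ` X) = the_elem (f ` Y)"
    then obtain x y where xy: "x \<in> A" "X = r `` {x}" "y \<in> A" "Y = r `` {y}"
      using quotient_cases by blast
    then have "f x = f y"
      using eq the_elem_class by simp
    then show "X = Y"
      using xy by (simp add: eq_class)
  qed
  moreover have "(\<lambda>X. the_elem (f ` X)) ` (A // r) = f ` A"
  proof
    show "(\<lambda>X. the_elem (f ` X)) ` (A // r) \<subseteq> f ` A"
      using quotient_cases the_elem_class by fastforce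
    show "f ` A \<subseteq> (\<lambda>X. the_elem (f ` X)) ` (A // r)"
    proof
      fix z assume "z \<in> f ` A"
      then obtain x where x: "x \<in> A" "z = f x"
        by blast
      then have "z = the_elem (f ` (r `` {x}))"
        using the_elem_class by simp
      then show "z \<in> (\<lambda>X. the_elem (f ` X)) ` (A // r)"
        using quotientI[OF x(1)] by blast
    qed
  qed
  ultimately show ?thesis
    by (simp add: bij_betw_def)
qed

theorem theorem4p3:
  fixes s :: "'k::field \<Rightarrow> 'v::ab_group_add \<Rightarrow> 'v"
    and s' :: "'k \<Rightarrow> 'w::ab_group_add \<Rightarrow> 'w"
    and n :: nat and \<rho> :: "nat \<Rightarrow> nat \<Rightarrow> bool"
    and Vf :: "nat set \<Rightarrow> 'v set" and Vf' :: "nat set \<Rightarrow> 'w set"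
    and v :: "nat \<Rightarrow> 'v" and v' :: "nat \<Rightarrow> 'w"
  assumes "n \<ge> 1"
    and "preorder_on_idx n \<rho>"
    and "vector_space s" and "vector_space s'"
    and "adapted_flag s n \<rho> Vf v" and "adapted_flag s' n \<rho> Vf' v'"
  shows "(\<forall>x\<in>Triples n \<rho>. \<forall>y\<in>Triples n \<rho>.
            Fmap s s' n \<rho> Vf v v' x = Fmap s s' n \<rho> Vf v v' y \<longleftrightarrow> (x, y) \<in> approx_rel n \<rho>)
      \<and> bij_betw (\<lambda>X. the_elem (Fmap s s' n \<rho> Vf v v' ` X))
           (Triples n \<rho> // approx_rel n \<rho>)
           (Iso_alg s s' (EndF s n \<rho> Vf) (EndF s' n \<rho> Vf'))"
proof -
  interpret flag_pair n \<rho> s s' Vf Vf' v v'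
    using assms by (simp add: flag_pair_def flag_pair_axioms_def idx_preorder_def)
  have kernel: "\<forall>x\<in>Triples n \<rho>. \<forall>y\<in>Triples n \<rho>.
      Fmap s s' n \<rho> Vf v v' x = Fmap s s' n \<rho> Vf v v' y \<longleftrightarrow> (x, y) \<in> approx_rel n \<rho>"
    using Fmap_eq_iff_approx_rel by blast
  moreover have "approx_rel n \<rho> \<subseteq> Triples n \<rho> \<times> Triples n \<rho>"
    by (auto simp: approx_rel_def)
  ultimately show ?thesis
    using bij_betw_the_elem_quotient[of "Triples n \<rho>" "Fmap s s' n \<rho> Vf v v'" "approx_rel n \<rho>"]
    by (simp add: Fmap_image_Triples)
qed

end
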